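(* Let $\hat\omega$ be the $\mathbb Q$-algebra endomorphism of $\mathscr P^{S_\infty}(\mathbb Q)$ determined by $\hat\omega(e_n)=h_n$, $\hat\omega(\bar e_n)=\bar h_n$, $\hat\omega(\underline e_n)=\underline h_n$, $\hat\omega(\bar{\underline e}_n)=\bar{\underline h}_n$. Then $\hat\omega(p_n)=(-1)^{n-1}p_n$ ($n\ge1$), $\hat\omega(\bar p_n)=(-1)^n\bar p_n$, $\hat\omega(\underline p_n)=(-1)^n\underline p_n$, $\hat\omega(\bar{\underline p}_n)=(-1)^{n-1}\bar{\underline p}_n$ ($n\ge0$). Consequently, for every $\mathcal N=2$ superpartition $\Lambda$, $\hat\omega(p_\Lambda)=\omega_\Lambda p_\Lambda$ with $\omega_\Lambda=(-1)^{|\Lambda|-\ell(\Lambda^{bi})-\ell(\Lambda^0)}$, where $\ell(\Lambda^{bi})$ is the number of bilined parts and $\ell(\Lambda^0)$ the number of nonzero unmarked parts of $\Lambda$.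
   Context: Variables: commuting $x_1,x_2,\dots$; Grassmann $\phi_1,\phi_2,\dots,\theta_1,\theta_2,\dots$, all pairwise anticommuting and commuting with the $x$'s. $\mathscr P^{S_\infty}(\mathbb Q)$: superfunctions invariant under simultaneous interchange $(x_i,\phi_i,\theta_i)\leftrightarrow(x_j,\phi_j,\theta_j)$ (infinitely many variables), freely generated (supercommutatively) by $e_n,\bar e_n,\underline e_n,\bar{\underline e}_n$. Here $h_n,e_n$ are the classical complete/elementary symmetric functions ($h_0=e_0=1$), $\partial_i=\partial/\partial x_i$, and for $f\in\{h,e\}$, $n\ge0$: $\bar f_n=\sum_i\phi_i\partial_if_{n+1}$, $\underline f_n=\sum_i\theta_i\partial_if_{n+1}$, $\bar{\underline f}_n=\sum_{i,j}\phi_i\theta_j\partial_i\partial_jf_{n+2}$. Power sums: $p_n=\sum_ix_i^n$ ($n\ge1$), $p_0:=0$; $\bar p_n=\sum_i\phi_ix_i^n$, $\underline p_n=\sum_i\theta_ix_i^n$, $\bar{\underline p}_n=\sum_i\phi_i\theta_ix_i^n$ ($n\ge0$). An $\mathcal N=2$ superpartition $\Lambda$ is a finite multiset of parts, each a nonnegative integer $a$ with one of the markings bilined ($\bar{\underline a}$), overlined ($\bar a$), underlined ($\underline a$), unmarked ($a$); overlined parts are pairwise distinct, underlined parts pairwise distinct, unmarked zero parts are disregarded. Parts are listed $\Lambda=(\Lambda_1,\dots,\Lambda_\ell)$ in nonincreasing order of value $|\Lambda_i|$, ties ordered bilined, overlined, underlined, unmarked; $|\Lambda|=\sum_i|\Lambda_i|$.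 For such $\Lambda$, $p_\Lambda=\tilde p_{\Lambda_1}\cdots\tilde p_{\Lambda_\ell}$ (product in this order), where $\tilde p_{\Lambda_i}$ is $\bar{\underline p}_n$, $\bar p_n$, $\underline p_n$ or $p_n$ ($n=|\Lambda_i|$) according as $\Lambda_i$ is bilined, overlined, underlined or unmarked. *)

theory Defs
  imports Complex_Main
begin

text \<open>Grassmann generators are encoded by natural numbers: phi_i is 2*i, theta_i is 2*i+1.
  A monomial is a pair (alpha, S): alpha the exponent function of the x's (finite support),
  S a finite set of Grassmann generators, standing for x^alpha times the product of the
  generators in S taken in increasing order.\<close>

type_synonym sf = "(nat \<Rightarrow> nat) \<Rightarrow> nat set \<Rightarrow> rat"

definition phi_idx :: "nat \<Rightarrow> nat" where "phi_idx i = 2 * i"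
definition theta_idx :: "nat \<Rightarrow> nat" where "theta_idx i = 2 * i + 1"

definition xsupp :: "(nat \<Rightarrow> nat) \<Rightarrow> nat set" where
  "xsupp \<alpha> = {i. \<alpha> i \<noteq> 0}"

definition xdeg :: "(nat \<Rightarrow> nat) \<Rightarrow> nat" where
  "xdeg \<alpha> = (\<Sum>i\<in>xsupp \<alpha>. \<alpha> i)"

text \<open>Sign of (ordered product of T) * (ordered product of U) = gsign T U * (ordered product of T \<union> U)
  for disjoint T, U.\<close>
definition gsign :: "nat set \<Rightarrow> nat set \<Rightarrow> rat" where
  "gsign T U = (-1) ^ card {(t, u). t \<in> T \<and> u \<in> U \<and> u < t}"

definition sf_zero :: sf where "sf_zero = (\<lambda>\<alpha> S. 0)"
definition sf_one :: sf where
  "sf_one = (\<lambda>\<alpha> S. if \<alpha> = (\<lambda>_. 0) \<and> S = {} then 1 else 0)"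
definition sf_add :: "sf \<Rightarrow> sf \<Rightarrow> sf" where
  "sf_add f g = (\<lambda>\<alpha> S. f \<alpha> S + g \<alpha> S)"
definition sf_smul :: "rat \<Rightarrow> sf \<Rightarrow> sf" where
  "sf_smul c f = (\<lambda>\<alpha> S. c * f \<alpha> S)"

definition sf_mul :: "sf \<Rightarrow> sf \<Rightarrow> sf" where
  "sf_mul f g = (\<lambda>\<alpha> S. \<Sum>\<beta>\<in>{\<beta>. \<forall>i. \<beta> i \<le> \<alpha> i}. \<Sum>T\<in>Pow S.
      gsign T (S - T) * f \<beta> T * g (\<lambda>i. \<alpha> i - \<beta> i) (S - T))"

definition sfsum :: "('i \<Rightarrow> sf) \<Rightarrow> sf" where
  "sfsum F = (\<lambda>\<alpha> S. \<Sum>i\<in>{i. F i \<alpha> S \<noteq> 0}. F i \<alpha> S)"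

definition dx :: "nat \<Rightarrow> sf \<Rightarrow> sf" where
  "dx i f = (\<lambda>\<alpha> S. of_nat (\<alpha> i + 1) * f (\<alpha>(i := \<alpha> i + 1)) S)"

definition xpow :: "nat \<Rightarrow> nat \<Rightarrow> sf" where
  "xpow i n = (\<lambda>\<alpha> S. if \<alpha> = (\<lambda>j. if j = i then n else 0) \<and> S = {} then 1 else 0)"
definition phi :: "nat \<Rightarrow> sf" where
  "phi i = (\<lambda>\<alpha> S. if \<alpha> = (\<lambda>_. 0) \<and> S = {phi_idx i} then 1 else 0)"
definition theta :: "nat \<Rightarrow> sf" where
  "theta i = (\<lambda>\<alpha> S. if \<alpha> = (\<lambda>_. 0) \<and> S = {theta_idx i} then 1 else 0)"

definition esym :: "nat \<Rightarrow> sf" where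
  "esym n = (\<lambda>\<alpha> S. if S = {} \<and> finite (xsupp \<alpha>) \<and> (\<forall>i. \<alpha> i \<le> 1) \<and> card (xsupp \<alpha>) = n
                    then 1 else 0)"
definition hsym :: "nat \<Rightarrow> sf" where
  "hsym n = (\<lambda>\<alpha> S. if S = {} \<and> finite (xsupp \<alpha>) \<and> xdeg \<alpha> = n then 1 else 0)"

definition bar_of :: "(nat \<Rightarrow> sf) \<Rightarrow> nat \<Rightarrow> sf" where
  "bar_of f n = sfsum (\<lambda>i. sf_mul (phi i) (dx i (f (n + 1))))"
definition under_of :: "(nat \<Rightarrow> sf) \<Rightarrow> nat \<Rightarrow> sf" where
  "under_of f n = sfsum (\<lambda>i. sf_mul (theta i) (dx i (f (n + 1))))"
definition barunder_of :: "(nat \<Rightarrow> sf) \<Rightarrow> nat \<Rightarrow> sf" where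
  "barunder_of f n = sfsum (\<lambda>(i, j). sf_mul (sf_mul (phi i) (theta j)) (dx i (dx j (f (n + 2)))))"

definition psum :: "nat \<Rightarrow> sf" where
  "psum n = (if n = 0 then sf_zero else sfsum (\<lambda>i. xpow i n))"
definition psum_bar :: "nat \<Rightarrow> sf" where
  "psum_bar n = sfsum (\<lambda>i. sf_mul (phi i) (xpow i n))"
definition psum_under :: "nat \<Rightarrow> sf" where
  "psum_under n = sfsum (\<lambda>i. sf_mul (theta i) (xpow i n))"
definition psum_barunder :: "nat \<Rightarrow> sf" where
  "psum_barunder n = sfsum (\<lambda>i. sf_mul (sf_mul (phi i) (theta i)) (xpow i n))"

text \<open>Simultaneous interchange (x_i,phi_i,theta_i) <-> (x_j,phi_j,theta_j).\<close>
definition var_swap :: "nat \<Rightarrow> nat \<Rightarrow> nat \<Rightarrow> nat" where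
  "var_swap i j k = (if k = i then j else if k = j then i else k)"
definition gvar_swap :: "nat \<Rightarrow> nat \<Rightarrow> nat \<Rightarrow> nat" where
  "gvar_swap i j a = 2 * var_swap i j (a div 2) + a mod 2"
text \<open>Sign produced by reordering the image of an ordered Grassmann monomial.\<close>
definition perm_gsign :: "(nat \<Rightarrow> nat) \<Rightarrow> nat set \<Rightarrow> rat" where
  "perm_gsign \<sigma> S = (-1) ^ card {(a, b). a \<in> S \<and> b \<in> S \<and> a < b \<and> \<sigma> b < \<sigma> a}"

definition swap_invariant :: "sf \<Rightarrow> bool" where
  "swap_invariant f \<longleftrightarrow> (\<forall>i j \<alpha> S.
     f (\<alpha> \<circ> var_swap i j) (gvar_swap i j ` S) = perm_gsign (gvar_swap i j) S * f \<alpha> S)"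

definition well_formed :: "sf \<Rightarrow> bool" where
  "well_formed f \<longleftrightarrow> (\<forall>\<alpha> S. f \<alpha> S \<noteq> 0 \<longrightarrow> finite (xsupp \<alpha>) \<and> finite S)"

definition bounded_degree :: "sf \<Rightarrow> bool" where
  "bounded_degree f \<longleftrightarrow> (\<exists>d. \<forall>\<alpha> S. f \<alpha> S \<noteq> 0 \<longrightarrow> xdeg \<alpha> + card S \<le> d)"

text \<open>P^{S_infty}(Q): symmetric superfunctions (bounded degree formal superseries
  invariant under all simultaneous interchanges).\<close>
definition PSinf :: "sf set" where
  "PSinf = {f. well_formed f \<and> bounded_degree f \<and> swap_invariant f}"

definition is_alg_endo :: "(sf \<Rightarrow> sf) \<Rightarrow> sf set \<Rightarrow> bool" where
  "is_alg_endo \<omega> A \<longleftrightarrow> (\<forall>f\<in>A. \<omega> f \<in> A) \<and> \<omega> sf_one = sf_one \<and>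
     (\<forall>f\<in>A. \<forall>g\<in>A. \<omega> (sf_add f g) = sf_add (\<omega> f) (\<omega> g)) \<and>
     (\<forall>c. \<forall>f\<in>A. \<omega> (sf_smul c f) = sf_smul c (\<omega> f)) \<and>
     (\<forall>f\<in>A. \<forall>g\<in>A. \<omega> (sf_mul f g) = sf_mul (\<omega> f) (\<omega> g))"

datatype mark = Bi | Over | Under | Unm

fun mark_rank :: "mark \<Rightarrow> nat" where
  "mark_rank Bi = 0" | "mark_rank Over = 1" | "mark_rank Under = 2" | "mark_rank Unm = 3"

text \<open>A superpartition is represented by the list of its parts (marking, value),
  listed in the canonical order of the paper.\<close>
definition part_before :: "mark \<times> nat \<Rightarrow> mark \<times> nat \<Rightarrow> bool" where
  "part_before a b \<longleftrightarrow> snd a > snd b \<or> (snd a = snd b \<and> mark_rank (fst a) \<le> mark_rank (fst b))"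

definition is_superpartition :: "(mark \<times> nat) list \<Rightarrow> bool" where
  "is_superpartition L \<longleftrightarrow> sorted_wrt part_before L \<and>
     distinct (filter (\<lambda>p. fst p = Over) L) \<and>
     distinct (filter (\<lambda>p. fst p = Under) L) \<and>
     (Unm, 0) \<notin> set L"

fun ptilde :: "mark \<times> nat \<Rightarrow> sf" where
  "ptilde (Bi, n) = psum_barunder n"
| "ptilde (Over, n) = psum_bar n"
| "ptilde (Under, n) = psum_under n"
| "ptilde (Unm, n) = psum n"

definition p_sp :: "(mark \<times> nat) list \<Rightarrow> sf" where
  "p_sp L = foldr (\<lambda>a acc. sf_mul (ptilde a) acc) L sf_one"

definition sp_size :: "(mark \<times> nat) list \<Rightarrow> nat" where
  "sp_size L = sum_list (map snd L)"
definition len_bi :: "(mark \<times> nat) list \<Rightarrow> nat" where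
  "len_bi L = length (filter (\<lambda>p. fst p = Bi) L)"
definition len_0 :: "(mark \<times> nat) list \<Rightarrow> nat" where
  "len_0 L = length (filter (\<lambda>p. fst p = Unm \<and> snd p \<noteq> 0) L)"

definition omega_sign :: "(mark \<times> nat) list \<Rightarrow> rat" where
  "omega_sign L = (-1) powi (int (sp_size L) - int (len_bi L) - int (len_0 L))"

end

theory Submission
  imports Defs "HOL-Library.FuncSet" "HOL-Library.Function_Algebras"
begin

text \<open>The generating functions \<open>E(t) = \<Prod>\<^sub>i (1 + x\<^sub>i t)\<close> and \<open>H(t) = \<Prod>\<^sub>i 1/(1 - x\<^sub>i t)\<close> both satisfy
  \<open>\<partial>F/\<partial>x\<^sub>k = t F \<Sum>\<^sub>r c\<^sub>r (x\<^sub>k t)\<^sup>r\<close>, with \<open>c\<^sub>r = (-1)\<^sup>r\<close> for \<open>E\<close> and \<open>c\<^sub>r = 1\<close> for \<open>H\<close>. Reading off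
  coefficients, once or twice, gives Newton-type identities expressing \<open>n e\<^sub>n\<close> and the three
  superpartners of \<open>e\<^sub>n\<close> through power sums multiplied by \<open>e\<close>'s, and the same identities for \<open>h\<close> with
  the signs \<open>c\<^sub>r\<close> dropped. Applying \<open>\<omega>\<close> to an \<open>e\<close>-identity and comparing with the corresponding
  \<open>h\<close>-identity yields a triangular system with \<open>h\<^sub>0 = 1\<close> on the diagonal, which forces \<open>\<omega>(p) = \<plusminus>p\<close>
  by induction on the degree; multiplicativity of \<open>\<omega>\<close> then gives the sign of \<open>p\<^sub>\<Lambda>\<close>.\<close>

section \<open>Coefficientwise arithmetic of superseries\<close>

definition sf_monom :: "(nat \<Rightarrow> nat) \<Rightarrow> nat set \<Rightarrow> rat \<Rightarrow> sf" where
  "sf_monom \<beta> T c = (\<lambda>\<alpha> S. if \<alpha> = \<beta> \<and> S = T then c else 0)"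

definition exp_single :: "nat \<Rightarrow> nat \<Rightarrow> nat \<Rightarrow> nat" where
  "exp_single i n = (\<lambda>j. if j = i then n else 0)"

lemma finite_exps_le:
  assumes "finite (xsupp \<alpha>)"
  shows "finite {\<beta>. \<forall>i. \<beta> i \<le> \<alpha> i}"
proof -
  let ?A = "xsupp \<alpha>"
  have "(\<lambda>\<beta>. restrict \<beta> ?A) ` {\<beta>. \<forall>i. \<beta> i \<le> \<alpha> i} \<subseteq> PiE ?A (\<lambda>i. {..\<alpha> i})"
    by (auto simp: PiE_def extensional_def)
  moreover have "finite (PiE ?A (\<lambda>i. {..\<alpha> i}))"
    using assms by (intro finite_PiE) auto
  moreover have "inj_on (\<lambda>\<beta>. restrict \<beta> ?A) {\<beta>. \<forall>i. \<beta> i \<le> \<alpha> i}"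
  proof (rule inj_onI)
    fix x y assume x: "x \<in> {\<beta>. \<forall>i. \<beta> i \<le> \<alpha> i}" and y: "y \<in> {\<beta>. \<forall>i. \<beta> i \<le> \<alpha> i}"
      and e: "restrict x ?A = restrict y ?A"
    show "x = y"
    proof
      fix i show "x i = y i"
        using fun_cong[OF e, of i] x y by (cases "i \<in> ?A") (auto simp: xsupp_def, metis le_zero_eq)
    qed
  qed
  ultimately show ?thesis by (meson finite_imageD finite_subset)
qed

lemma infinite_exps_le:
  assumes "\<not> finite (xsupp \<alpha>)"
  shows "\<not> finite {\<beta>. \<forall>i. \<beta> i \<le> \<alpha> i}"
proof
  assume f: "finite {\<beta>. \<forall>i. \<beta> i \<le> \<alpha> i}"
  have "(\<lambda>i. exp_single i 1) ` xsupp \<alpha> \<subseteq> {\<beta>. \<forall>i. \<beta> i \<le> \<alpha> i}"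
    by (auto simp: exp_single_def xsupp_def)
  moreover have "inj_on (\<lambda>i. exp_single i 1) (xsupp \<alpha>)"
    by (rule inj_onI) (metis exp_single_def zero_neq_one)
  ultimately have "finite (xsupp \<alpha>)"
    using f by (meson finite_imageD finite_subset)
  then show False using assms by simp
qed

text \<open>The product is defined by a sum over all exponents below \<open>\<alpha>\<close>; when these are infinitely
  many, that sum is the junk value \<open>0\<close>.\<close>
lemma sf_mul_eq_0_if_infinite:
  assumes "\<not> finite (xsupp \<alpha>) \<or> \<not> finite S"
  shows "sf_mul f g \<alpha> S = 0"
  using assms infinite_exps_le[of \<alpha>] by (auto simp: sf_mul_def)

lemma sf_mul_eq_sum_pairs:
  assumes "finite (xsupp \<alpha>)" "finite S"
  shows "sf_mul f g \<alpha> S = (\<Sum>(\<beta>,T)\<in>{\<beta>. \<forall>i. \<beta> i \<le> \<alpha> i} \<times> Pow S.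
            gsign T (S - T) * f \<beta> T * g (\<lambda>i. \<alpha> i - \<beta> i) (S - T))"
  unfolding sf_mul_def by (subst sum.cartesian_product) simp

lemma sf_mul_monom_left:
  "sf_mul (sf_monom \<beta> T c) g \<alpha> S =
    (if finite (xsupp \<alpha>) \<and> finite S \<and> (\<forall>i. \<beta> i \<le> \<alpha> i) \<and> T \<subseteq> S
     then c * gsign T (S - T) * g (\<lambda>i. \<alpha> i - \<beta> i) (S - T) else 0)"
proof (cases "finite (xsupp \<alpha>) \<and> finite S")
  case False then show ?thesis using sf_mul_eq_0_if_infinite by auto
next
  case True
  let ?D = "{\<beta>. \<forall>i. \<beta> i \<le> \<alpha> i} \<times> Pow S"
  let ?h = "\<lambda>(\<beta>', T'). gsign T' (S - T') * sf_monom \<beta> T c \<beta>' T' * g (\<lambda>i. \<alpha> i - \<beta>' i) (S - T')"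
  have "sf_mul (sf_monom \<beta> T c) g \<alpha> S = sum ?h ?D"
    using True by (simp add: sf_mul_eq_sum_pairs)
  also have "\<dots> = sum ?h (?D \<inter> {(\<beta>, T)})"
  proof (rule sum.mono_neutral_right)
    show "finite ?D" using True finite_exps_le by simp
    show "\<forall>x\<in>?D - ?D \<inter> {(\<beta>, T)}. ?h x = 0" by (auto simp: sf_monom_def split: if_splits)
  qed auto
  also have "\<dots> = (if (\<forall>i. \<beta> i \<le> \<alpha> i) \<and> T \<subseteq> S then c * gsign T (S - T) * g (\<lambda>i. \<alpha> i - \<beta> i) (S - T) else 0)"
    by (auto simp: sf_monom_def Int_insert_right)
  finally show ?thesis using True by simp
qed

lemma gsign_empty_left[simp]: "gsign {} U = 1"
  and gsign_empty_right[simp]: "gsign T {} = 1"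
  by (auto simp: gsign_def)

lemma sf_mul_monom_monom:
  assumes "finite (xsupp \<beta>1)" "finite (xsupp \<beta>2)" "finite T1" "finite T2" "T1 \<inter> T2 = {}"
  shows "sf_mul (sf_monom \<beta>1 T1 c1) (sf_monom \<beta>2 T2 c2)
           = sf_monom (\<lambda>k. \<beta>1 k + \<beta>2 k) (T1 \<union> T2) (c1 * c2 * gsign T1 T2)"
proof (intro ext)
  fix \<alpha> S
  have fin: "finite (xsupp (\<lambda>k. \<beta>1 k + \<beta>2 k))"
    by (rule finite_subset[of _ "xsupp \<beta>1 \<union> xsupp \<beta>2"]) (use assms in \<open>auto simp: xsupp_def\<close>)
  have "((\<forall>i. \<beta>1 i \<le> \<alpha> i) \<and> T1 \<subseteq> S \<and> (\<lambda>i. \<alpha> i - \<beta>1 i) = \<beta>2 \<and> S - T1 = T2)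
        \<longleftrightarrow> \<alpha> = (\<lambda>k. \<beta>1 k + \<beta>2 k) \<and> S = T1 \<union> T2"
    using assms(5) by (auto simp: fun_eq_iff) (metis le_add_diff_inverse)
  then show "sf_mul (sf_monom \<beta>1 T1 c1) (sf_monom \<beta>2 T2 c2) \<alpha> S
           = sf_monom (\<lambda>k. \<beta>1 k + \<beta>2 k) (T1 \<union> T2) (c1 * c2 * gsign T1 T2) \<alpha> S"
    using assms fin unfolding sf_mul_monom_left by (auto simp: sf_monom_def)
qed

lemma sf_mul_one_right:
  assumes "well_formed f"
  shows "sf_mul f sf_one = f"
proof (intro ext)
  fix \<alpha> S
  show "sf_mul f sf_one \<alpha> S = f \<alpha> S"
  proof (cases "finite (xsupp \<alpha>) \<and> finite S")
    case False
    then show ?thesis using assms sf_mul_eq_0_if_infinite by (auto simp: well_formed_def)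
  next
    case True
    let ?D = "{\<beta>. \<forall>i. \<beta> i \<le> \<alpha> i} \<times> Pow S"
    let ?h = "\<lambda>(\<beta>,T). gsign T (S - T) * f \<beta> T * sf_one (\<lambda>i. \<alpha> i - \<beta> i) (S - T)"
    have only_top: "\<forall>x\<in>?D - {(\<alpha>, S)}. ?h x = 0"
    proof
      fix x assume x: "x \<in> ?D - {(\<alpha>, S)}"
      obtain \<beta> T where xe: "x = (\<beta>, T)" by (cases x)
      have "(\<lambda>i. \<alpha> i - \<beta> i) \<noteq> (\<lambda>_. 0) \<or> S - T \<noteq> {}"
        using x xe by (auto simp: fun_eq_iff intro: le_antisym)
      then show "?h x = 0" using xe by (auto simp: sf_one_def)
    qed
    have "sf_mul f sf_one \<alpha> S = sum ?h ?D"
      using True by (simp add: sf_mul_eq_sum_pairs)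
    also have "\<dots> = sum ?h {(\<alpha>, S)}"
      by (rule sum.mono_neutral_right) (use True finite_exps_le only_top in simp_all)
    also have "\<dots> = f \<alpha> S" by (simp add: sf_one_def)
    finally show ?thesis .
  qed
qed

lemma sfsum_eq_sum:
  assumes "finite A" "{i. F i \<alpha> S \<noteq> 0} \<subseteq> A"
  shows "sfsum F \<alpha> S = (\<Sum>i\<in>A. F i \<alpha> S)"
  unfolding sfsum_def by (rule sum.mono_neutral_left) (use assms in auto)

lemma sf_add_eq_plus: "sf_add f g = f + g"
  by (simp add: sf_add_def fun_eq_iff)

lemma sf_zero_eq_0: "sf_zero = 0"
  by (simp add: sf_zero_def fun_eq_iff)

lemma sum_sf_apply: "(sum F A) \<alpha> S = (\<Sum>x\<in>A. F x \<alpha> S)"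
  by (induction A rule: infinite_finite_induct) auto

lemma sf_smul_apply: "sf_smul c f \<alpha> S = c * f \<alpha> S"
  by (simp add: sf_smul_def)

lemma sf_smul_one[simp]: "sf_smul 1 f = f"
  by (simp add: sf_smul_def)

lemma sf_smul_smul: "sf_smul a (sf_smul b f) = sf_smul (a * b) f"
  by (simp add: sf_smul_def mult.assoc)

lemma sf_smul_minus_one: "sf_smul (-1) f = - f"
  by (simp add: sf_smul_def fun_eq_iff)

lemma sf_smul_add: "sf_smul c (f + g) = sf_smul c f + sf_smul c g"
  by (simp add: sf_smul_def fun_eq_iff algebra_simps)

lemma sf_smul_diff: "sf_smul c (f - g) = sf_smul c f - sf_smul c g"
  by (simp add: sf_smul_def fun_eq_iff algebra_simps)

lemma sf_smul_uminus: "sf_smul (- c) f = - sf_smul c f"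
  by (simp add: sf_smul_def fun_eq_iff)

lemma sf_smul_sum: "sf_smul c (sum F A) = (\<Sum>x\<in>A. sf_smul c (F x))"
  by (simp add: sf_smul_def fun_eq_iff sum_sf_apply sum_distrib_left)

lemma sf_smul_cancel:
  assumes "c \<noteq> 0" "sf_smul c f = sf_smul c g"
  shows "f = g"
  using assms by (auto simp: sf_smul_def fun_eq_iff dest: fun_cong)

lemma sf_mul_smul_left: "sf_mul (sf_smul c f) g = sf_smul c (sf_mul f g)"
  by (simp add: sf_mul_def sf_smul_def sum_distrib_left fun_eq_iff ac_simps)

lemma sf_mul_smul_right: "sf_mul f (sf_smul c g) = sf_smul c (sf_mul f g)"
  by (simp add: sf_mul_def sf_smul_def sum_distrib_left fun_eq_iff ac_simps)

lemma sf_mul_zero_left: "sf_mul 0 g = 0"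
  by (simp add: sf_mul_def fun_eq_iff)


definition monom_family :: "(nat \<Rightarrow> nat \<Rightarrow> nat) \<Rightarrow> (nat \<Rightarrow> nat set) \<Rightarrow> sf" where
  "monom_family B G = (\<lambda>\<alpha> S. if \<exists>i. \<alpha> = B i \<and> S = G i then 1 else 0)"

lemma sfsum_monom_eq_monom_family:
  assumes "\<And>i j. B i = B j \<Longrightarrow> G i = G j \<Longrightarrow> i = j"
  shows "sfsum (\<lambda>i. sf_monom (B i) (G i) 1) = monom_family B G"
proof (intro ext)
  fix \<alpha> S
  have support: "{i. sf_monom (B i) (G i) 1 \<alpha> S \<noteq> 0} = {i. \<alpha> = B i \<and> S = G i}"
    by (auto simp: sf_monom_def)
  show "sfsum (\<lambda>i. sf_monom (B i) (G i) 1) \<alpha> S = monom_family B G \<alpha> S"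
  proof (cases "\<exists>i. \<alpha> = B i \<and> S = G i")
    case True
    then obtain i where i: "\<alpha> = B i" "S = G i" by blast
    then have "{i. \<alpha> = B i \<and> S = G i} = {i}" using assms by auto
    then show ?thesis
      using i support by (simp add: sfsum_eq_sum[of "{i}"] sf_monom_def monom_family_def) blast
  next
    case False
    then show ?thesis
      using support by (simp add: sfsum_eq_sum[of "{}"] monom_family_def)
  qed
qed

lemma sf_mul_monom_family:
  assumes inj: "\<And>i j. B i = B j \<Longrightarrow> G i = G j \<Longrightarrow> i = j"
    and fa: "finite (xsupp \<alpha>)" and fS: "finite S"
  shows "sf_mul (monom_family B G) g \<alpha> S = (\<Sum>i\<in>{i. (\<forall>k. B i k \<le> \<alpha> k) \<and> G i \<subseteq> S}.
           gsign (G i) (S - G i) * g (\<lambda>k. \<alpha> k - B i k) (S - G i))"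
proof -
  let ?I = "{i. (\<forall>k. B i k \<le> \<alpha> k) \<and> G i \<subseteq> S}"
  let ?D = "{\<beta>. \<forall>i. \<beta> i \<le> \<alpha> i} \<times> Pow S"
  let ?h = "\<lambda>(\<beta>,T). gsign T (S - T) * monom_family B G \<beta> T * g (\<lambda>i. \<alpha> i - \<beta> i) (S - T)"
  have "sf_mul (monom_family B G) g \<alpha> S = sum ?h ?D"
    using fa fS by (simp add: sf_mul_eq_sum_pairs)
  also have "\<dots> = sum ?h ((\<lambda>i. (B i, G i)) ` ?I)"
  proof (rule sum.mono_neutral_right)
    show "finite ?D" using finite_exps_le[OF fa] fS by simp
    show "\<forall>x\<in>?D - (\<lambda>i. (B i, G i)) ` ?I. ?h x = 0"
      by (auto simp: monom_family_def)
  qed auto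
  also have "\<dots> = (\<Sum>i\<in>?I. ?h (B i, G i))"
    by (subst sum.reindex) (auto intro!: inj_onI dest: inj)
  also have "\<dots> = (\<Sum>i\<in>?I. gsign (G i) (S - G i) * g (\<lambda>k. \<alpha> k - B i k) (S - G i))"
    by (rule sum.cong) (auto simp: monom_family_def)
  finally show ?thesis .
qed

lemma sf_mul_monom_family_nonzeroD:
  assumes "sf_mul (monom_family B G) g \<alpha> S \<noteq> 0"
  obtains i where "\<forall>k. B i k \<le> \<alpha> k" "G i \<subseteq> S" "g (\<lambda>k. \<alpha> k - B i k) (S - G i) \<noteq> 0"
proof -
  have "\<exists>i. (\<forall>k. B i k \<le> \<alpha> k) \<and> G i \<subseteq> S \<and> g (\<lambda>k. \<alpha> k - B i k) (S - G i) \<noteq> 0"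
  proof (rule ccontr)
    assume "\<not> ?thesis"
    then have "sf_mul (monom_family B G) g \<alpha> S = 0"
      unfolding sf_mul_def
      by (intro sum.neutral ballI) (auto simp: monom_family_def)
    then show False using assms by simp
  qed
  then show ?thesis using that by blast
qed

section \<open>The algebra of symmetric superfunctions\<close>

definition neg_if :: "bool \<Rightarrow> rat" where
  "neg_if P = (if P then -1 else 1)"

lemma neg_one_power_card_filter:
  assumes "finite A"
  shows "(-1::rat) ^ card {x\<in>A. P x} = (\<Prod>x\<in>A. neg_if (P x))"
  using prod.inter_filter[OF assms, of "\<lambda>_. (-1::rat)" P] by (simp add: neg_if_def)

lemma gsign_eq_prod:
  assumes "finite T" "finite U"
  shows "gsign T U = (\<Prod>(t,u)\<in>T \<times> U. neg_if (u < t))"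
proof -
  have "{(t, u). t \<in> T \<and> u \<in> U \<and> u < t} = {x\<in>T \<times> U. snd x < fst x}" by auto
  then show ?thesis
    unfolding gsign_def using neg_one_power_card_filter[of "T \<times> U" "\<lambda>x. snd x < fst x"] assms
    by (simp add: case_prod_beta)
qed

lemma perm_gsign_eq_prod:
  assumes "finite S"
  shows "perm_gsign \<sigma> S = (\<Prod>(a,b)\<in>S \<times> S. neg_if (a < b \<and> \<sigma> b < \<sigma> a))"
proof -
  have "{(a, b). a \<in> S \<and> b \<in> S \<and> a < b \<and> \<sigma> b < \<sigma> a}
        = {x\<in>S \<times> S. fst x < snd x \<and> \<sigma> (snd x) < \<sigma> (fst x)}" by auto
  then show ?thesis
    unfolding perm_gsign_def
    using neg_one_power_card_filter[of "S \<times> S" "\<lambda>x. fst x < snd x \<and> \<sigma> (snd x) < \<sigma> (fst x)"] assms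
    by (simp add: case_prod_beta)
qed

lemma prod_pairs_swap:
  "(\<Prod>(a,b)\<in>U \<times> T. h a b) = (\<Prod>(t,u)\<in>T \<times> U. (h u t :: rat))"
  by (rule prod.reindex_bij_witness[where i="\<lambda>(t,u). (u,t)" and j="\<lambda>(a,b). (b,a)"]) auto

text \<open>Both sides are the sign of sorting the word \<open>\<sigma>(T) \<sigma>(U)\<close>: pairs inside \<open>T\<close> or inside \<open>U\<close>
  contribute \<open>perm_gsign\<close>, mixed pairs \<open>gsign\<close>.\<close>
lemma gsign_image_perm_gsign:
  assumes inj: "inj \<sigma>" and fT: "finite T" and fU: "finite U" and dj: "T \<inter> U = {}"
  shows "gsign (\<sigma> ` T) (\<sigma> ` U) * perm_gsign \<sigma> T * perm_gsign \<sigma> U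
       = perm_gsign \<sigma> (T \<union> U) * gsign T U"
proof -
  let ?h = "\<lambda>(a,b). neg_if (a < b \<and> \<sigma> b < \<sigma> a)"
  have split: "(T \<union> U) \<times> (T \<union> U) = ((T \<times> T) \<union> (U \<times> U)) \<union> ((T \<times> U) \<union> (U \<times> T))" by auto
  have disj: "(T \<times> T \<union> U \<times> U) \<inter> (T \<times> U \<union> U \<times> T) = {}"
    "(T \<times> T) \<inter> (U \<times> U) = {}" "(T \<times> U) \<inter> (U \<times> T) = {}"
    using dj by auto
  have ps: "perm_gsign \<sigma> (T \<union> U) = perm_gsign \<sigma> T * perm_gsign \<sigma> U *
      ((\<Prod>x\<in>T \<times> U. ?h x) * (\<Prod>x\<in>U \<times> T. ?h x))"
    unfolding perm_gsign_eq_prod[OF finite_UnI[OF fT fU]] perm_gsign_eq_prod[OF fT]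
      perm_gsign_eq_prod[OF fU] split
    using fT fU by (simp add: prod.union_disjoint disj)
  have mixed: "(\<Prod>x\<in>U \<times> T. ?h x) = (\<Prod>(t,u)\<in>T \<times> U. neg_if (u < t \<and> \<sigma> t < \<sigma> u))"
    using prod_pairs_swap[of "\<lambda>a b. neg_if (a < b \<and> \<sigma> b < \<sigma> a)" U T] by simp
  have image: "gsign (\<sigma> ` T) (\<sigma> ` U) = (\<Prod>(t,u)\<in>T \<times> U. neg_if (\<sigma> u < \<sigma> t))"
  proof -
    have "\<sigma> ` T \<times> \<sigma> ` U = (\<lambda>(t,u). (\<sigma> t, \<sigma> u)) ` (T \<times> U)" by auto
    then show ?thesis
      using fT fU by (simp add: gsign_eq_prod prod.reindex inj_on_def inj_eq[OF inj] case_prod_beta)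
  qed
  have pointwise: "(\<Prod>(t,u)\<in>T \<times> U. neg_if (\<sigma> u < \<sigma> t)) =
        (\<Prod>x\<in>T \<times> U. ?h x) * (\<Prod>(t,u)\<in>T \<times> U. neg_if (u < t \<and> \<sigma> t < \<sigma> u)) *
        (\<Prod>(t,u)\<in>T \<times> U. neg_if (u < t))"
    unfolding prod.distrib[symmetric]
  proof (rule prod.cong[OF refl], clarify)
    fix t u assume "t \<in> T" "u \<in> U"
    then have "t \<noteq> u" "\<sigma> t \<noteq> \<sigma> u" using dj inj by (auto simp: inj_eq)
    then show "neg_if (\<sigma> u < \<sigma> t)
        = neg_if (t < u \<and> \<sigma> u < \<sigma> t) * neg_if (u < t \<and> \<sigma> t < \<sigma> u) * neg_if (u < t)"
      by (cases "t < u"; cases "\<sigma> u < \<sigma> t") (auto simp: neg_if_def)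
  qed
  show ?thesis using ps mixed image pointwise gsign_eq_prod[OF fT fU] by (simp add: ac_simps)
qed

lemma var_swap_invol[simp]: "var_swap i j (var_swap i j k) = k"
  by (auto simp: var_swap_def)

lemma gvar_swap_invol[simp]: "gvar_swap i j (gvar_swap i j a) = a"
  by (simp add: gvar_swap_def)

lemma inj_var_swap: "inj (var_swap i j)"
  by (metis var_swap_invol injI)

lemma inj_gvar_swap: "inj (gvar_swap i j)"
  by (metis gvar_swap_invol injI)

lemma comp_var_swap_invol[simp]: "\<alpha> \<circ> var_swap i j \<circ> var_swap i j = \<alpha>"
  by (simp add: fun_eq_iff)

lemma xsupp_comp_var_swap: "xsupp (\<alpha> \<circ> var_swap i j) = var_swap i j ` xsupp \<alpha>"
  by (auto simp: xsupp_def image_iff) (metis var_swap_invol)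

lemma finite_xsupp_comp_var_swap[simp]: "finite (xsupp (\<alpha> \<circ> var_swap i j)) \<longleftrightarrow> finite (xsupp \<alpha>)"
  by (simp add: xsupp_comp_var_swap finite_image_iff inj_on_subset[OF inj_var_swap])

lemma sf_mul_summand_swap:
  fixes i j :: nat
  assumes f: "swap_invariant f" and g: "swap_invariant g" and fS: "finite S" and TS: "T \<subseteq> S"
  defines "s \<equiv> var_swap i j" and "\<sigma> \<equiv> gvar_swap i j"
  shows "gsign (\<sigma> ` T) (\<sigma> ` S - \<sigma> ` T) * f (\<beta> \<circ> s) (\<sigma> ` T) * g (\<lambda>k. (\<alpha> \<circ> s) k - (\<beta> \<circ> s) k) (\<sigma> ` S - \<sigma> ` T)
       = perm_gsign \<sigma> S * (gsign T (S - T) * f \<beta> T * g (\<lambda>k. \<alpha> k - \<beta> k) (S - T))"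
proof -
  have d: "\<sigma> ` S - \<sigma> ` T = \<sigma> ` (S - T)"
    unfolding \<sigma>_def by (simp add: image_set_diff[OF inj_gvar_swap])
  have diff: "(\<lambda>k. (\<alpha> \<circ> s) k - (\<beta> \<circ> s) k) = (\<lambda>k. \<alpha> k - \<beta> k) \<circ> s"
    by (simp add: comp_def)
  have "gsign (\<sigma> ` T) (\<sigma> ` (S - T)) * perm_gsign \<sigma> T * perm_gsign \<sigma> (S - T)
      = perm_gsign \<sigma> S * gsign T (S - T)"
    using gsign_image_perm_gsign[OF inj_gvar_swap finite_subset[OF TS fS], of "S - T" i j] fS TS
    unfolding \<sigma>_def by (simp add: Un_absorb1)
  moreover have "f (\<beta> \<circ> s) (\<sigma> ` T) = perm_gsign \<sigma> T * f \<beta> T"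
    using f unfolding swap_invariant_def s_def \<sigma>_def by blast
  moreover have "g ((\<lambda>k. \<alpha> k - \<beta> k) \<circ> s) (\<sigma> ` (S - T)) = perm_gsign \<sigma> (S - T) * g (\<lambda>k. \<alpha> k - \<beta> k) (S - T)"
    using g unfolding swap_invariant_def s_def \<sigma>_def by blast
  ultimately show ?thesis
    unfolding d diff by (simp add: mult_ac)
qed

lemma swap_invariant_sf_mul:
  assumes f: "swap_invariant f" and g: "swap_invariant g"
  shows "swap_invariant (sf_mul f g)"
  unfolding swap_invariant_def
proof (intro allI)
  fix i j \<alpha> S
  let ?s = "var_swap i j" and ?\<sigma> = "gvar_swap i j"
  show "sf_mul f g (\<alpha> \<circ> ?s) (?\<sigma> ` S) = perm_gsign ?\<sigma> S * sf_mul f g \<alpha> S"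
  proof (cases "finite (xsupp \<alpha>) \<and> finite S")
    case False
    then show ?thesis
      by (simp add: sf_mul_eq_0_if_infinite finite_image_iff inj_on_subset[OF inj_gvar_swap])
  next
    case True
    let ?D = "{\<beta>. \<forall>k. \<beta> k \<le> \<alpha> k} \<times> Pow S"
    let ?D' = "{\<beta>. \<forall>k. \<beta> k \<le> (\<alpha> \<circ> ?s) k} \<times> Pow (?\<sigma> ` S)"
    let ?\<tau> = "\<lambda>(\<beta>, T). (\<beta> \<circ> ?s, ?\<sigma> ` T)"
    let ?t = "\<lambda>(\<beta>,T). gsign T (S - T) * f \<beta> T * g (\<lambda>k. \<alpha> k - \<beta> k) (S - T)"
    let ?t' = "\<lambda>(\<beta>,T). gsign T (?\<sigma> ` S - T) * f \<beta> T * g (\<lambda>k. (\<alpha> \<circ> ?s) k - \<beta> k) (?\<sigma> ` S - T)"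
    have tau_invol: "?\<tau> (?\<tau> x) = x" for x
      by (cases x) (simp add: image_image comp_assoc[symmetric])
    have tau_D: "?\<tau> x \<in> ?D'" if "x \<in> ?D" for x
      using that by (cases x) auto
    have tau_D': "?\<tau> x \<in> ?D" if "x \<in> ?D'" for x
    proof (cases x)
      case (Pair \<beta> T)
      then have le: "\<forall>k. \<beta> k \<le> \<alpha> (var_swap i j k)" and T: "T \<subseteq> ?\<sigma> ` S"
        using that by auto
      have "\<beta> (var_swap i j k) \<le> \<alpha> k" for k
        using le[rule_format, of "var_swap i j k"] by simp
      then show ?thesis
        using Pair T by (auto simp: image_subset_iff)
    qed
    have "sf_mul f g (\<alpha> \<circ> ?s) (?\<sigma> ` S) = sum ?t' ?D'"
      using True by (simp add: sf_mul_eq_sum_pairs)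
    also have "\<dots> = (\<Sum>x\<in>?D. perm_gsign ?\<sigma> S * ?t x)"
    proof (rule sum.reindex_bij_witness[where i="?\<tau>" and j="?\<tau>"])
      fix x assume x: "x \<in> ?D'"
      obtain \<beta> T where "?\<tau> x = (\<beta>, T)" by (cases "?\<tau> x")
      moreover have "(\<beta>, T) \<in> ?D" using tau_D'[OF x] calculation by simp
      ultimately show "perm_gsign ?\<sigma> S * ?t (?\<tau> x) = ?t' x"
        using sf_mul_summand_swap[OF f g, where S=S and T=T and \<alpha>=\<alpha> and \<beta>=\<beta> and i=i and j=j]
          tau_invol[of x] True by auto
    qed (use tau_invol tau_D tau_D' in \<open>simp_all only:\<close>)
    also have "\<dots> = perm_gsign ?\<sigma> S * sf_mul f g \<alpha> S"
      using True by (simp add: sf_mul_eq_sum_pairs sum_distrib_left)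
    finally show ?thesis .
  qed
qed

lemma xdeg_eq_sum:
  assumes "finite F" "xsupp \<alpha> \<subseteq> F"
  shows "xdeg \<alpha> = (\<Sum>i\<in>F. \<alpha> i)"
  unfolding xdeg_def by (rule sum.mono_neutral_left) (use assms in \<open>auto simp: xsupp_def\<close>)

lemma xdeg_add_diff:
  assumes "finite (xsupp \<alpha>)" "\<forall>i. \<beta> i \<le> \<alpha> i"
  shows "xdeg \<alpha> = xdeg \<beta> + xdeg (\<lambda>i. \<alpha> i - \<beta> i)"
proof -
  have "xsupp \<beta> \<subseteq> xsupp \<alpha>"
    unfolding xsupp_def using assms(2) by (metis (mono_tags) Collect_mono le_zero_eq)
  moreover have "xsupp (\<lambda>i. \<alpha> i - \<beta> i) \<subseteq> xsupp \<alpha>"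
    by (auto simp: xsupp_def)
  moreover have "(\<Sum>i\<in>xsupp \<alpha>. \<alpha> i) = (\<Sum>i\<in>xsupp \<alpha>. \<beta> i) + (\<Sum>i\<in>xsupp \<alpha>. \<alpha> i - \<beta> i)"
    using assms(2) by (simp add: sum.distrib[symmetric])
  ultimately show ?thesis
    using assms(1) by (simp add: xdeg_eq_sum[OF assms(1)])
qed

lemma well_formed_sf_mul: "well_formed (sf_mul f g)"
  unfolding well_formed_def using sf_mul_eq_0_if_infinite by blast

lemma bounded_degree_sf_mul:
  assumes f: "bounded_degree f" and g: "bounded_degree g"
  shows "bounded_degree (sf_mul f g)"
proof -
  obtain d1 where d1: "\<And>\<alpha> S. f \<alpha> S \<noteq> 0 \<Longrightarrow> xdeg \<alpha> + card S \<le> d1"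
    using f by (auto simp: bounded_degree_def)
  obtain d2 where d2: "\<And>\<alpha> S. g \<alpha> S \<noteq> 0 \<Longrightarrow> xdeg \<alpha> + card S \<le> d2"
    using g by (auto simp: bounded_degree_def)
  have "xdeg \<alpha> + card S \<le> d1 + d2" if nz: "sf_mul f g \<alpha> S \<noteq> 0" for \<alpha> S
  proof -
    have fin: "finite (xsupp \<alpha>)" "finite S" using nz sf_mul_eq_0_if_infinite by blast+
    obtain x where "x \<in> {\<beta>. \<forall>i. \<beta> i \<le> \<alpha> i} \<times> Pow S"
      and "(\<lambda>(\<beta>,T). gsign T (S - T) * f \<beta> T * g (\<lambda>i. \<alpha> i - \<beta> i) (S - T)) x \<noteq> 0"
      using nz fin by (metis (no_types, lifting) sf_mul_eq_sum_pairs sum.not_neutral_contains_not_neutral)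
    then obtain \<beta> T where le: "\<forall>i. \<beta> i \<le> \<alpha> i" and TS: "T \<subseteq> S"
      and fz: "f \<beta> T \<noteq> 0" and gz: "g (\<lambda>i. \<alpha> i - \<beta> i) (S - T) \<noteq> 0"
      by auto
    have "card S = card T + card (S - T)"
      using TS fin(2) by (metis card_Diff_subset card_mono finite_subset le_add_diff_inverse)
    then show ?thesis using d1[OF fz] d2[OF gz] xdeg_add_diff[OF fin(1) le] by simp
  qed
  then show ?thesis unfolding bounded_degree_def by blast
qed

lemma PSinf_sf_mul: "f \<in> PSinf \<Longrightarrow> g \<in> PSinf \<Longrightarrow> sf_mul f g \<in> PSinf"
  unfolding PSinf_def using well_formed_sf_mul bounded_degree_sf_mul swap_invariant_sf_mul by blast

lemma PSinf_iff: "f \<in> PSinf \<longleftrightarrow> (\<forall>\<alpha> S. f \<alpha> S \<noteq> 0 \<longrightarrow> finite (xsupp \<alpha>) \<and> finite S) \<and>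
   (\<exists>d. \<forall>\<alpha> S. f \<alpha> S \<noteq> 0 \<longrightarrow> xdeg \<alpha> + card S \<le> d) \<and>
   (\<forall>i j \<alpha> S. f (\<alpha> \<circ> var_swap i j) (gvar_swap i j ` S) = perm_gsign (gvar_swap i j) S * f \<alpha> S)"
  unfolding PSinf_def well_formed_def bounded_degree_def swap_invariant_def by simp

lemma well_formed_PSinf: "f \<in> PSinf \<Longrightarrow> well_formed f"
  by (simp add: PSinf_def)

lemma PSinf_linear_comb:
  assumes f: "f \<in> PSinf" and g: "g \<in> PSinf"
  shows "(\<lambda>\<alpha> S. a * f \<alpha> S + b * g \<alpha> S) \<in> PSinf"
proof -
  obtain d1 where d1: "\<And>\<alpha> S. f \<alpha> S \<noteq> 0 \<Longrightarrow> xdeg \<alpha> + card S \<le> d1"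
    using f by (auto simp: PSinf_iff)
  obtain d2 where d2: "\<And>\<alpha> S. g \<alpha> S \<noteq> 0 \<Longrightarrow> xdeg \<alpha> + card S \<le> d2"
    using g by (auto simp: PSinf_iff)
  have nz: "f \<alpha> S \<noteq> 0 \<or> g \<alpha> S \<noteq> 0" if "a * f \<alpha> S + b * g \<alpha> S \<noteq> 0" for \<alpha> S
    using that by auto
  have "xdeg \<alpha> + card S \<le> d1 + d2" if "a * f \<alpha> S + b * g \<alpha> S \<noteq> 0" for \<alpha> S
    using nz[OF that] d1 d2 by fastforce
  moreover have "finite (xsupp \<alpha>) \<and> finite S" if "a * f \<alpha> S + b * g \<alpha> S \<noteq> 0" for \<alpha> S
    using nz[OF that] f g by (auto simp: PSinf_iff)
  moreover have "a * f (\<alpha> \<circ> var_swap i j) (gvar_swap i j ` S) + b * g (\<alpha> \<circ> var_swap i j) (gvar_swap i j ` S)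
      = perm_gsign (gvar_swap i j) S * (a * f \<alpha> S + b * g \<alpha> S)" for i j \<alpha> S
    using f g by (simp add: PSinf_iff algebra_simps)
  ultimately show ?thesis
    unfolding PSinf_iff by blast
qed

lemma PSinf_add: "f \<in> PSinf \<Longrightarrow> g \<in> PSinf \<Longrightarrow> f + g \<in> PSinf"
  using PSinf_linear_comb[of f g 1 1] by (simp add: plus_fun_def)

lemma PSinf_smul: "f \<in> PSinf \<Longrightarrow> sf_smul c f \<in> PSinf"
  using PSinf_linear_comb[of f f c 0] by (simp add: sf_smul_def)

lemma PSinf_zero: "0 \<in> PSinf"
  unfolding PSinf_iff by simp

lemma PSinf_sum: "(\<And>x. x \<in> A \<Longrightarrow> F x \<in> PSinf) \<Longrightarrow> sum F A \<in> PSinf"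
  by (induction A rule: infinite_finite_induct) (auto intro: PSinf_add PSinf_zero)

lemma perm_gsign_empty[simp]: "perm_gsign \<sigma> {} = 1"
  by (simp add: perm_gsign_def)

lemma PSinf_one: "sf_one \<in> PSinf"
proof -
  have "\<alpha> \<circ> var_swap i j = (\<lambda>_. 0) \<longleftrightarrow> \<alpha> = (\<lambda>_. 0)" for \<alpha> :: "nat \<Rightarrow> nat" and i j
    by (auto simp: fun_eq_iff) (metis var_swap_invol)
  then show ?thesis
    unfolding PSinf_iff by (auto simp: sf_one_def xsupp_def xdeg_def)
qed


section \<open>Power sums as families of monomials\<close>

lemma phi_idx_eq_iff[simp]: "phi_idx i = phi_idx j \<longleftrightarrow> i = j"
  and theta_idx_eq_iff[simp]: "theta_idx i = theta_idx j \<longleftrightarrow> i = j"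
  and phi_idx_neq_theta_idx[simp]: "phi_idx i \<noteq> theta_idx j" "theta_idx j \<noteq> phi_idx i"
  by (auto simp: phi_idx_def theta_idx_def) presburger+

lemma inj_phi_idx: "inj phi_idx" and inj_theta_idx: "inj theta_idx"
  by (auto intro: injI)

lemma gvar_swap_phi_idx[simp]: "gvar_swap i j (phi_idx k) = phi_idx (var_swap i j k)"
  and gvar_swap_theta_idx[simp]: "gvar_swap i j (theta_idx k) = theta_idx (var_swap i j k)"
  by (simp_all add: gvar_swap_def phi_idx_def theta_idx_def)

lemma gsign_singletons: "gsign {a} {b} = (if b < a then -1 else 1)"
proof -
  have "{(t, u). t \<in> {a} \<and> u \<in> {b} \<and> u < t} = (if b < a then {(a,b)} else {})" by auto
  then show ?thesis by (simp add: gsign_def)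
qed

lemma gsign_phi_theta_same[simp]: "gsign {phi_idx i} {theta_idx i} = 1"
  by (simp add: gsign_singletons phi_idx_def theta_idx_def)

lemma xsupp_zero[simp]: "xsupp (\<lambda>_. 0) = {}"
  by (simp add: xsupp_def)

lemma exp_single_le_iff: "(\<forall>k. exp_single i r k \<le> \<alpha> k) \<longleftrightarrow> r \<le> \<alpha> i"
  by (auto simp: exp_single_def)

lemma diff_exp_single: "(\<lambda>k. \<alpha> k - exp_single i r k) = \<alpha>(i := \<alpha> i - r)"
  by (auto simp: exp_single_def fun_eq_iff)

lemma xsupp_exp_single: "xsupp (exp_single i n) = (if n = 0 then {} else {i})"
  by (auto simp: exp_single_def xsupp_def)

lemma xdeg_exp_single[simp]: "xdeg (exp_single i n) = n"
  unfolding xdeg_def xsupp_exp_single by (auto simp: exp_single_def)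

lemma exp_single_comp_var_swap: "exp_single k n \<circ> var_swap i j = exp_single (var_swap i j k) n"
  by (auto simp: exp_single_def fun_eq_iff var_swap_def)

lemma exp_single_inj: "n \<noteq> 0 \<Longrightarrow> exp_single i n = exp_single j n \<Longrightarrow> i = j"
  by (metis exp_single_def)

lemma xpow_eq_monom: "xpow i n = sf_monom (exp_single i n) {} 1"
  by (simp add: xpow_def sf_monom_def exp_single_def fun_eq_iff)

definition grass :: "nat \<Rightarrow> sf" where
  "grass a = sf_monom (\<lambda>_. 0) {a} 1"

lemma phi_eq_grass: "phi i = grass (phi_idx i)"
  and theta_eq_grass: "theta i = grass (theta_idx i)"
  by (simp_all add: phi_def theta_def grass_def sf_monom_def fun_eq_iff)

lemma grass_mul_xpow: "sf_mul (grass a) (xpow i n) = sf_monom (exp_single i n) {a} 1"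
  unfolding grass_def xpow_eq_monom
  by (subst sf_mul_monom_monom) (auto simp: xsupp_exp_single)

text \<open>\<open>psum_grass G n\<close> is \<open>\<Sum>\<^sub>i \<gamma>\<^sub>G\<^sub>i x\<^sub>i\<^sup>n\<close>, where \<open>\<gamma>\<^sub>a\<close> is the Grassmann generator with index \<open>a\<close>;
  it covers both \<open>p\<^sub>n\<close>-bar (\<open>G = phi_idx\<close>) and \<open>p\<^sub>n\<close>-underline (\<open>G = theta_idx\<close>).\<close>
definition psum_grass :: "(nat \<Rightarrow> nat) \<Rightarrow> nat \<Rightarrow> sf" where
  "psum_grass G n = monom_family (\<lambda>i. exp_single i n) (\<lambda>i. {G i})"

lemma sfsum_grass_mul_xpow:
  assumes "inj G"
  shows "sfsum (\<lambda>i. sf_mul (grass (G i)) (xpow i n)) = psum_grass G n"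
  unfolding grass_mul_xpow psum_grass_def
  by (rule sfsum_monom_eq_monom_family) (use assms in \<open>simp add: inj_eq\<close>)

lemma psum_bar_eq_psum_grass: "psum_bar = psum_grass phi_idx"
  by (simp add: fun_eq_iff psum_bar_def phi_eq_grass sfsum_grass_mul_xpow inj_phi_idx)

lemma psum_under_eq_psum_grass: "psum_under = psum_grass theta_idx"
  by (simp add: fun_eq_iff psum_under_def theta_eq_grass sfsum_grass_mul_xpow inj_theta_idx)

lemma psum_eq_monom_family:
  assumes "n \<noteq> 0"
  shows "psum n = monom_family (\<lambda>i. exp_single i n) (\<lambda>i. {})"
proof -
  have "sfsum (\<lambda>i. sf_monom (exp_single i n) {} 1) = monom_family (\<lambda>i. exp_single i n) (\<lambda>i. {})"
    by (rule sfsum_monom_eq_monom_family) (use assms exp_single_inj in blast)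
  then show ?thesis
    using assms by (simp add: psum_def xpow_eq_monom)
qed

lemma psum_barunder_eq_monom_family:
  "psum_barunder n = monom_family (\<lambda>i. exp_single i n) (\<lambda>i. {phi_idx i, theta_idx i})"
proof -
  have "sf_mul (phi i) (theta i) = sf_monom (\<lambda>_. 0) {phi_idx i, theta_idx i} 1" for i
    unfolding phi_eq_grass theta_eq_grass grass_def
    by (subst sf_mul_monom_monom) (simp_all add: insert_commute)
  moreover have "sf_mul (sf_monom (\<lambda>_. 0) {phi_idx i, theta_idx i} 1) (xpow i n)
      = sf_monom (exp_single i n) {phi_idx i, theta_idx i} 1" for i
    unfolding xpow_eq_monom by (subst sf_mul_monom_monom) (simp_all add: xsupp_exp_single)
  moreover have "sfsum (\<lambda>i. sf_monom (exp_single i n) {phi_idx i, theta_idx i} 1)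
      = monom_family (\<lambda>i. exp_single i n) (\<lambda>i. {phi_idx i, theta_idx i})"
    by (rule sfsum_monom_eq_monom_family) (simp add: doubleton_eq_iff)
  ultimately show ?thesis
    unfolding psum_barunder_def by simp
qed

lemma monom_family_in_PSinf:
  assumes fin: "\<And>k. finite (G k)" and card: "\<And>k. card (G k) \<le> 2"
    and swap: "\<And>i j k. G (var_swap i j k) = gvar_swap i j ` G k"
    and sign: "\<And>i j k. perm_gsign (gvar_swap i j) (G k) = 1"
  shows "monom_family (\<lambda>k. exp_single k n) G \<in> PSinf"
proof -
  have "(\<exists>k. \<alpha> \<circ> var_swap i j = exp_single k n \<and> gvar_swap i j ` S = G k)
        \<longleftrightarrow> (\<exists>k. \<alpha> = exp_single k n \<and> S = G k)" for i j \<alpha> S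
  proof
    assume "\<exists>k. \<alpha> \<circ> var_swap i j = exp_single k n \<and> gvar_swap i j ` S = G k"
    then obtain k where k: "\<alpha> \<circ> var_swap i j = exp_single k n" "gvar_swap i j ` S = G k" by blast
    have "\<alpha> = \<alpha> \<circ> var_swap i j \<circ> var_swap i j" by simp
    also have "\<dots> = exp_single (var_swap i j k) n" by (simp add: k exp_single_comp_var_swap)
    finally have "\<alpha> = exp_single (var_swap i j k) n" .
    moreover have "S = gvar_swap i j ` gvar_swap i j ` S" by (simp add: image_image)
    then have "S = G (var_swap i j k)" by (simp add: k swap)
    ultimately show "\<exists>k. \<alpha> = exp_single k n \<and> S = G k" by blast
  next
    assume "\<exists>k. \<alpha> = exp_single k n \<and> S = G k"
    then obtain k where "\<alpha> = exp_single k n" "S = G k" by blast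
    then show "\<exists>k. \<alpha> \<circ> var_swap i j = exp_single k n \<and> gvar_swap i j ` S = G k"
      by (intro exI[of _ "var_swap i j k"]) (simp add: swap exp_single_comp_var_swap)
  qed
  then show ?thesis
    using fin card sign unfolding PSinf_iff
    by (auto simp: monom_family_def xsupp_exp_single intro: exI[of _ "n + 2"])
qed

lemma perm_gsign_singleton: "perm_gsign \<sigma> {a} = 1"
proof -
  have "{(x, y). x \<in> {a} \<and> y \<in> {a} \<and> x < y \<and> \<sigma> y < \<sigma> x} = {}" by auto
  then show ?thesis unfolding perm_gsign_def by (simp only:) simp
qed

lemma perm_gsign_phi_theta: "perm_gsign (gvar_swap i j) {phi_idx k, theta_idx k} = 1"
proof -
  have "{(a, b). a \<in> {phi_idx k, theta_idx k} \<and> b \<in> {phi_idx k, theta_idx k} \<and> a < b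
          \<and> gvar_swap i j b < gvar_swap i j a} = {}"
    by (auto simp: phi_idx_def theta_idx_def gvar_swap_def)
  then show ?thesis unfolding perm_gsign_def by (simp only:) simp
qed

lemma psum_in_PSinf: "psum n \<in> PSinf"
proof (cases "n = 0")
  case True
  then show ?thesis by (simp add: psum_def sf_zero_eq_0 PSinf_zero)
next
  case False
  show ?thesis
    unfolding psum_eq_monom_family[OF False] by (rule monom_family_in_PSinf) simp_all
qed

lemma psum_grass_in_PSinf:
  assumes "\<And>i j k. G (var_swap i j k) = gvar_swap i j (G k)"
  shows "psum_grass G n \<in> PSinf"
  unfolding psum_grass_def
  by (rule monom_family_in_PSinf) (simp_all add: assms perm_gsign_singleton)

lemma psum_bar_in_PSinf: "psum_bar n \<in> PSinf"
  and psum_under_in_PSinf: "psum_under n \<in> PSinf"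
  by (simp_all add: psum_bar_eq_psum_grass psum_under_eq_psum_grass psum_grass_in_PSinf)

lemma psum_barunder_in_PSinf: "psum_barunder n \<in> PSinf"
  unfolding psum_barunder_eq_monom_family
  by (rule monom_family_in_PSinf) (auto simp: perm_gsign_phi_theta card_insert_if)


lemma xdeg_eq_card_xsupp:
  assumes "finite (xsupp \<alpha>)" "\<forall>i. \<alpha> i \<le> 1"
  shows "xdeg \<alpha> = card (xsupp \<alpha>)"
proof -
  have "\<alpha> i = 1" if "i \<in> xsupp \<alpha>" for i
    using that assms(2) le_antisym[of "\<alpha> i" 1] by (auto simp: xsupp_def)
  then show ?thesis by (simp add: xdeg_def)
qed

lemma esym_in_PSinf: "esym n \<in> PSinf"
proof -
  have "card (xsupp (\<alpha> \<circ> var_swap i j)) = card (xsupp \<alpha>)" for \<alpha> :: "nat \<Rightarrow> nat" and i j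
    by (simp add: xsupp_comp_var_swap card_image inj_on_subset[OF inj_var_swap])
  moreover have "(\<forall>k. (\<alpha> \<circ> var_swap i j) k \<le> 1) \<longleftrightarrow> (\<forall>k. \<alpha> k \<le> 1)" for \<alpha> :: "nat \<Rightarrow> nat" and i j
    by (metis comp_apply var_swap_invol)
  ultimately show ?thesis
    unfolding PSinf_iff by (auto simp: esym_def xdeg_eq_card_xsupp intro: exI[of _ n])
qed

section \<open>Coefficients of products with power sums\<close>

definition grassmann_free :: "sf \<Rightarrow> bool" where
  "grassmann_free f \<longleftrightarrow> (\<forall>\<alpha> S. S \<noteq> {} \<longrightarrow> f \<alpha> S = 0)"

lemma grassmann_free_esym: "grassmann_free (esym n)"
  and grassmann_free_hsym: "grassmann_free (hsym n)"
  by (simp_all add: grassmann_free_def esym_def hsym_def)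

lemma grassmann_free_dx: "grassmann_free f \<Longrightarrow> grassmann_free (dx i f)"
  by (simp add: grassmann_free_def dx_def)

lemma grassmann_free_nonzeroD: "grassmann_free g \<Longrightarrow> g \<alpha> T \<noteq> 0 \<Longrightarrow> T = {}"
  by (auto simp: grassmann_free_def)

lemma sf_mul_psum_coeff:
  assumes fa: "finite (xsupp \<alpha>)"
  shows "sf_mul (psum r) g \<alpha> {} = (\<Sum>k\<in>xsupp \<alpha>. if 0 < r \<and> r \<le> \<alpha> k then g (\<alpha>(k := \<alpha> k - r)) {} else 0)"
proof (cases "r = 0")
  case True
  then show ?thesis by (simp add: psum_def sf_zero_eq_0 sf_mul_zero_left)
next
  case False
  have sub: "{k. r \<le> \<alpha> k} \<subseteq> xsupp \<alpha>"
    using False by (auto simp: xsupp_def)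
  have "sf_mul (psum r) g \<alpha> {} = (\<Sum>k\<in>{k. r \<le> \<alpha> k}. g (\<alpha>(k := \<alpha> k - r)) {})"
    unfolding psum_eq_monom_family[OF False]
    using sf_mul_monom_family[of "\<lambda>k. exp_single k r" "\<lambda>_. {}" \<alpha> "{}" g] exp_single_inj[OF False] fa
    by (simp add: exp_single_le_iff diff_exp_single)
  also have "\<dots> = (\<Sum>k\<in>xsupp \<alpha>. if 0 < r \<and> r \<le> \<alpha> k then g (\<alpha>(k := \<alpha> k - r)) {} else 0)"
    using fa sub False by (simp add: sum.If_cases Int_absorb1 inf.absorb2)
  finally show ?thesis .
qed

lemma sf_mul_psum_nonempty:
  assumes "grassmann_free g" "S \<noteq> {}"
  shows "sf_mul (psum r) g \<alpha> S = 0"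
proof (cases "r = 0")
  case True
  then show ?thesis by (simp add: psum_def sf_zero_eq_0 sf_mul_zero_left)
next
  case False
  show ?thesis
  proof (rule ccontr)
    assume "sf_mul (psum r) g \<alpha> S \<noteq> 0"
    then obtain k where "g (\<lambda>m. \<alpha> m - exp_single k r m) S \<noteq> 0"
      unfolding psum_eq_monom_family[OF False] by (auto elim: sf_mul_monom_family_nonzeroD)
    then show False using assms grassmann_free_nonzeroD by blast
  qed
qed

lemma sf_mul_monom_family_single:
  assumes inj: "\<And>i j. G i = G j \<Longrightarrow> i = j"
    and only: "\<And>k. r \<le> \<alpha> k \<Longrightarrow> G k \<subseteq> S \<Longrightarrow> k = i" and fS: "finite S"
  shows "sf_mul (monom_family (\<lambda>k. exp_single k r) G) g \<alpha> S =
     (if finite (xsupp \<alpha>) \<and> r \<le> \<alpha> i \<and> G i \<subseteq> S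
      then gsign (G i) (S - G i) * g (\<alpha>(i := \<alpha> i - r)) (S - G i) else 0)"
proof (cases "finite (xsupp \<alpha>)")
  case False
  then show ?thesis using sf_mul_eq_0_if_infinite by simp
next
  case True
  let ?I = "{k. (\<forall>m. exp_single k r m \<le> \<alpha> m) \<and> G k \<subseteq> S}"
  have I: "?I = (if r \<le> \<alpha> i \<and> G i \<subseteq> S then {i} else {})"
    using only by (auto simp: exp_single_le_iff)
  have "sf_mul (monom_family (\<lambda>k. exp_single k r) G) g \<alpha> S
      = (\<Sum>k\<in>?I. gsign (G k) (S - G k) * g (\<lambda>m. \<alpha> m - exp_single k r m) (S - G k))"
    by (rule sf_mul_monom_family) (use inj True fS in auto)
  then show ?thesis using True by (simp add: I diff_exp_single)
qed

lemma sf_mul_psum_grass_coeff: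
  assumes "inj G"
  shows "sf_mul (psum_grass G r) g \<alpha> {G i} =
    (if finite (xsupp \<alpha>) \<and> r \<le> \<alpha> i then g (\<alpha>(i := \<alpha> i - r)) {} else 0)"
  unfolding psum_grass_def
  by (subst sf_mul_monom_family_single[where i=i]) (use assms in \<open>auto dest: injD\<close>)

lemma sf_mul_psum_grass_zero:
  assumes "grassmann_free g" "\<And>k. S \<noteq> {G k}"
  shows "sf_mul (psum_grass G r) g \<alpha> S = 0"
proof (rule ccontr)
  assume "sf_mul (psum_grass G r) g \<alpha> S \<noteq> 0"
  then obtain k where "G k \<in> S" "g (\<lambda>m. \<alpha> m - exp_single k r m) (S - {G k}) \<noteq> 0"
    unfolding psum_grass_def by (auto elim: sf_mul_monom_family_nonzeroD)
  then have "S = {G k}"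
    using assms(1) by (auto dest: grassmann_free_nonzeroD)
  then show False using assms(2) by blast
qed

lemma sf_mul_psum_bar_coeff_pair:
  "sf_mul (psum_bar r) g \<alpha> {phi_idx i, theta_idx j} =
    (if finite (xsupp \<alpha>) \<and> r \<le> \<alpha> i
     then gsign {phi_idx i} {theta_idx j} * g (\<alpha>(i := \<alpha> i - r)) {theta_idx j} else 0)"
proof -
  have "{phi_idx i, theta_idx j} - {phi_idx i} = {theta_idx j}" by auto
  then show ?thesis
    unfolding psum_bar_eq_psum_grass psum_grass_def
    by (subst sf_mul_monom_family_single[where i=i]) auto
qed

lemma sf_mul_psum_barunder_coeff_pair:
  "sf_mul (psum_barunder r) g \<alpha> {phi_idx i, theta_idx j} =
    (if finite (xsupp \<alpha>) \<and> i = j \<and> r \<le> \<alpha> i then g (\<alpha>(i := \<alpha> i - r)) {} else 0)"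
proof (cases "i = j")
  case True
  show ?thesis
    unfolding psum_barunder_eq_monom_family True
    by (subst sf_mul_monom_family_single[where i=j]) (auto simp: doubleton_eq_iff)
next
  case False
  have "sf_mul (psum_barunder r) g \<alpha> {phi_idx i, theta_idx j} = 0"
  proof (rule ccontr)
    assume "sf_mul (psum_barunder r) g \<alpha> {phi_idx i, theta_idx j} \<noteq> 0"
    then obtain k where "{phi_idx k, theta_idx k} \<subseteq> {phi_idx i, theta_idx j}"
      unfolding psum_barunder_eq_monom_family by (auto elim: sf_mul_monom_family_nonzeroD)
    then show False using False by auto
  qed
  then show ?thesis using False by simp
qed

lemma sf_mul_psum_bar_under_zero:
  assumes "grassmann_free g" "\<And>i j. S \<noteq> {phi_idx i, theta_idx j}"
  shows "sf_mul (psum_bar a) (sf_mul (psum_under b) g) \<alpha> S = 0"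
proof (rule ccontr)
  assume "sf_mul (psum_bar a) (sf_mul (psum_under b) g) \<alpha> S \<noteq> 0"
  then obtain k \<alpha>' where k: "phi_idx k \<in> S" "sf_mul (psum_under b) g \<alpha>' (S - {phi_idx k}) \<noteq> 0"
    unfolding psum_bar_eq_psum_grass psum_grass_def by (auto elim: sf_mul_monom_family_nonzeroD)
  then obtain l \<alpha>'' where l: "theta_idx l \<in> S - {phi_idx k}" "g \<alpha>'' (S - {phi_idx k} - {theta_idx l}) \<noteq> 0"
    unfolding psum_under_eq_psum_grass psum_grass_def by (auto elim: sf_mul_monom_family_nonzeroD)
  then have "S = {phi_idx k, theta_idx l}"
    using k(1) assms(1) by (auto dest: grassmann_free_nonzeroD)
  then show False using assms(2) by blast
qed

lemma sf_mul_psum_barunder_zero: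
  assumes "grassmann_free g" "\<And>i j. S \<noteq> {phi_idx i, theta_idx j}"
  shows "sf_mul (psum_barunder m) g \<alpha> S = 0"
proof (rule ccontr)
  assume "sf_mul (psum_barunder m) g \<alpha> S \<noteq> 0"
  then obtain k \<alpha>' where "{phi_idx k, theta_idx k} \<subseteq> S" "g \<alpha>' (S - {phi_idx k, theta_idx k}) \<noteq> 0"
    unfolding psum_barunder_eq_monom_family by (auto elim: sf_mul_monom_family_nonzeroD)
  then have "S = {phi_idx k, theta_idx k}"
    using assms(1) by (auto dest: grassmann_free_nonzeroD)
  then show False using assms(2) by blast
qed

section \<open>Coefficients of the superpartners of \<open>e\<^sub>n\<close> and \<open>h\<^sub>n\<close>\<close>

definition grass_of :: "(nat \<Rightarrow> nat) \<Rightarrow> (nat \<Rightarrow> sf) \<Rightarrow> nat \<Rightarrow> sf" where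
  "grass_of G f n = sfsum (\<lambda>i. sf_mul (grass (G i)) (dx i (f (n + 1))))"

lemma bar_of_eq_grass_of: "bar_of = grass_of phi_idx"
  and under_of_eq_grass_of: "under_of = grass_of theta_idx"
  by (simp_all add: fun_eq_iff bar_of_def under_of_def grass_of_def phi_eq_grass theta_eq_grass)

lemma sf_mul_grass_coeff:
  "sf_mul (grass a) g \<alpha> S =
    (if finite (xsupp \<alpha>) \<and> finite S \<and> a \<in> S then gsign {a} (S - {a}) * g \<alpha> (S - {a}) else 0)"
  unfolding grass_def sf_mul_monom_left by simp

lemma grass_of_coeff:
  assumes "inj G" "grassmann_free (f (n + 1))"
  shows "grass_of G f n \<alpha> {G k} = (if finite (xsupp \<alpha>) then dx k (f (n + 1)) \<alpha> {} else 0)"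
proof -
  have "grass_of G f n \<alpha> {G k} = (\<Sum>i\<in>{k}. sf_mul (grass (G i)) (dx i (f (n + 1))) \<alpha> {G k})"
    unfolding grass_of_def
    by (rule sfsum_eq_sum) (use assms(1) in \<open>auto simp: sf_mul_grass_coeff dest: injD split: if_splits\<close>)
  then show ?thesis by (simp add: sf_mul_grass_coeff)
qed

lemma grass_of_zero:
  assumes "grassmann_free (f (n + 1))" "\<And>k. S \<noteq> {G k}"
  shows "grass_of G f n \<alpha> S = 0"
proof -
  have "sf_mul (grass (G i)) (dx i (f (n + 1))) \<alpha> S = 0" for i
  proof (rule ccontr)
    assume "sf_mul (grass (G i)) (dx i (f (n + 1))) \<alpha> S \<noteq> 0"
    then have "G i \<in> S" "dx i (f (n + 1)) \<alpha> (S - {G i}) \<noteq> 0"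
      by (auto simp: sf_mul_grass_coeff split: if_splits)
    then have "S = {G i}"
      using grassmann_free_dx[OF assms(1)] by (auto dest: grassmann_free_nonzeroD)
    then show False using assms(2) by blast
  qed
  then show ?thesis
    unfolding grass_of_def by (simp add: sfsum_eq_sum[of "{}"])
qed

lemma sf_mul_phi_theta:
  "sf_mul (phi i) (theta j) = sf_monom (\<lambda>_. 0) {phi_idx i, theta_idx j} (gsign {phi_idx i} {theta_idx j})"
  unfolding phi_eq_grass theta_eq_grass grass_def
  by (subst sf_mul_monom_monom) (simp_all add: insert_commute)

lemma sf_mul_phi_theta_coeff:
  "sf_mul (sf_mul (phi i) (theta j)) g \<alpha> S =
    (if finite (xsupp \<alpha>) \<and> finite S \<and> {phi_idx i, theta_idx j} \<subseteq> S
     then gsign {phi_idx i} {theta_idx j} * gsign {phi_idx i, theta_idx j} (S - {phi_idx i, theta_idx j})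
          * g \<alpha> (S - {phi_idx i, theta_idx j})
     else 0)"
  unfolding sf_mul_phi_theta sf_mul_monom_left by simp

lemma barunder_of_coeff:
  "barunder_of f n \<alpha> {phi_idx i, theta_idx j} =
    (if finite (xsupp \<alpha>) then gsign {phi_idx i} {theta_idx j} * dx i (dx j (f (n + 2))) \<alpha> {} else 0)"
proof -
  let ?F = "\<lambda>(i, j). sf_mul (sf_mul (phi i) (theta j)) (dx i (dx j (f (n + 2))))"
  have "barunder_of f n \<alpha> {phi_idx i, theta_idx j} = (\<Sum>p\<in>{(i, j)}. ?F p \<alpha> {phi_idx i, theta_idx j})"
    unfolding barunder_of_def
    by (rule sfsum_eq_sum) (auto simp: sf_mul_phi_theta_coeff split: if_splits)
  then show ?thesis by (simp add: sf_mul_phi_theta_coeff)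
qed

lemma barunder_of_zero:
  assumes "grassmann_free (f (n + 2))" "\<And>i j. S \<noteq> {phi_idx i, theta_idx j}"
  shows "barunder_of f n \<alpha> S = 0"
proof -
  have "sf_mul (sf_mul (phi i) (theta j)) (dx i (dx j (f (n + 2)))) \<alpha> S = 0" for i j
  proof (rule ccontr)
    assume "sf_mul (sf_mul (phi i) (theta j)) (dx i (dx j (f (n + 2)))) \<alpha> S \<noteq> 0"
    then have "{phi_idx i, theta_idx j} \<subseteq> S" "dx i (dx j (f (n + 2))) \<alpha> (S - {phi_idx i, theta_idx j}) \<noteq> 0"
      by (auto simp: sf_mul_phi_theta_coeff split: if_splits)
    then have "S = {phi_idx i, theta_idx j}"
      using grassmann_free_dx[OF grassmann_free_dx[OF assms(1)]] by (auto dest: grassmann_free_nonzeroD)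
    then show False using assms(2) by blast
  qed
  then show ?thesis
    unfolding barunder_of_def by (simp add: sfsum_eq_sum[of "{}"] case_prod_beta)
qed


section \<open>The Newton identities\<close>

text \<open>\<open>ecoeff J m \<alpha>\<close> is the coefficient of \<open>x\<^sup>\<alpha>\<close> in \<open>e\<^sub>m\<close> of the variables not indexed by \<open>J\<close>.\<close>
definition ecoeff :: "nat set \<Rightarrow> nat \<Rightarrow> (nat \<Rightarrow> nat) \<Rightarrow> rat" where
  "ecoeff J m \<alpha> =
    (if finite (xsupp \<alpha>) \<and> (\<forall>i. \<alpha> i \<le> 1) \<and> (\<forall>j\<in>J. \<alpha> j = 0) \<and> card (xsupp \<alpha>) = m then 1 else 0)"

definition hcoeff :: "nat \<Rightarrow> (nat \<Rightarrow> nat) \<Rightarrow> rat" where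
  "hcoeff m \<alpha> = (if finite (xsupp \<alpha>) \<and> xdeg \<alpha> = m then 1 else 0)"

lemma esym_apply: "esym m \<alpha> S = (if S = {} then ecoeff {} m \<alpha> else 0)"
  by (simp add: esym_def ecoeff_def)

lemma hsym_apply: "hsym m \<alpha> S = (if S = {} then hcoeff m \<alpha> else 0)"
  by (simp add: hsym_def hcoeff_def)

lemma xsupp_fun_upd: "xsupp (\<alpha>(i := v)) = (if v = 0 then xsupp \<alpha> - {i} else insert i (xsupp \<alpha>))"
  by (auto simp: xsupp_def)

lemma finite_xsupp_fun_upd[simp]: "finite (xsupp (\<alpha>(i := v))) \<longleftrightarrow> finite (xsupp \<alpha>)"
  by (simp add: xsupp_fun_upd)

lemma ecoeff_insert_zero: "\<alpha> i = 0 \<Longrightarrow> ecoeff (insert i J) m \<alpha> = ecoeff J m \<alpha>"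
  by (simp add: ecoeff_def)

lemma ecoeff_gt_one: "1 < \<alpha> i \<Longrightarrow> ecoeff J m \<alpha> = 0"
  by (auto simp: ecoeff_def not_le)

lemma ecoeff_Suc_upd_one:
  assumes "i \<notin> J" "\<alpha> i = 0"
  shows "ecoeff J (Suc m) (\<alpha>(i := 1)) = ecoeff J m \<alpha>"
proof -
  have "i \<notin> xsupp \<alpha>" using assms(2) by (simp add: xsupp_def)
  then have "finite (xsupp \<alpha>) \<Longrightarrow> card (xsupp (\<alpha>(i := 1))) = Suc (card (xsupp \<alpha>))"
    by (simp add: xsupp_fun_upd)
  moreover have "(\<forall>l. (\<alpha>(i := 1)) l \<le> 1) \<longleftrightarrow> (\<forall>l. \<alpha> l \<le> 1)"
  proof
    assume H: "\<forall>l. (\<alpha>(i := 1)) l \<le> 1"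
    show "\<forall>l. \<alpha> l \<le> 1"
    proof
      fix l show "\<alpha> l \<le> 1" using H[rule_format, of l] assms(2) by (cases "l = i") auto
    qed
  qed auto
  ultimately show ?thesis
    using assms(1) by (auto simp: ecoeff_def)
qed

text \<open>Coefficientwise, this is \<open>\<partial>\<^sub>k e\<^sub>m\<^sub>+\<^sub>1 = e\<^sub>m\<close> of the variables other than \<open>x\<^sub>k\<close>.\<close>
lemma ecoeff_dx:
  assumes "k \<notin> J"
  shows "of_nat (\<alpha> k + 1) * ecoeff J (m + 1) (\<alpha>(k := \<alpha> k + 1)) = ecoeff (insert k J) m \<alpha>"
proof (cases "\<alpha> k = 0")
  case True
  then show ?thesis
    using ecoeff_Suc_upd_one[of k J \<alpha> m] assms True by (simp add: ecoeff_insert_zero)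
next
  case False
  have "ecoeff J (m + 1) (\<alpha>(k := \<alpha> k + 1)) = 0"
    by (rule ecoeff_gt_one[where i=k]) (use False in simp)
  moreover have "ecoeff (insert k J) m \<alpha> = 0"
    using False by (simp add: ecoeff_def)
  ultimately show ?thesis by simp
qed

text \<open>Only the terms with \<open>r = \<alpha> i - 1\<close> and \<open>r = \<alpha> i\<close> can be nonzero, and they cancel.\<close>
lemma ecoeff_alternating_sum_eq_0:
  assumes iJ: "i \<notin> J" and fa: "finite (xsupp \<alpha>)" and nz: "\<alpha> i \<noteq> 0"
  shows "(\<Sum>r\<le>m. (-1)^r * (if r \<le> \<alpha> i then ecoeff J (m - r) (\<alpha>(i := \<alpha> i - r)) else 0)) = 0"
proof -
  define k where "k = \<alpha> i"
  have k: "k \<ge> 1" using nz k_def by simp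
  define a where "a = ecoeff J (m - (k - 1)) (\<alpha>(i := 1))"
  define b where "b = ecoeff J (m - k) (\<alpha>(i := 0))"
  have terms: "(-1)^r * (if r \<le> \<alpha> i then ecoeff J (m - r) (\<alpha>(i := \<alpha> i - r)) else 0)
      = (if r = k - 1 then (-1)^(k - 1) * a else 0) + (if r = k then (-1)^k * b else 0)" for r :: nat
  proof -
    consider "r = k - 1" | "r = k" | "r + 2 \<le> k" | "k < r" using k by linarith
    then show ?thesis
    proof cases
      case 3
      then have "1 < (\<alpha>(i := \<alpha> i - r)) i" by (simp add: k_def)
      then have "ecoeff J (m - r) (\<alpha>(i := \<alpha> i - r)) = 0" by (rule ecoeff_gt_one)
      moreover have "r \<noteq> k - 1" "r \<noteq> k" using 3 by auto
      ultimately show ?thesis by simp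
    qed (use k in \<open>auto simp: a_def b_def k_def\<close>)
  qed
  have "(\<Sum>r\<le>m. (-1)^r * (if r \<le> \<alpha> i then ecoeff J (m - r) (\<alpha>(i := \<alpha> i - r)) else 0))
      = (if k - 1 \<le> m then (-1)^(k - 1) * a else 0) + (if k \<le> m then (-1)^k * b else 0)"
    by (simp add: terms sum.distrib)
  also have "\<dots> = 0"
  proof (cases "k \<le> m")
    case True
    have "a = b"
      using ecoeff_Suc_upd_one[OF iJ, of "\<alpha>(i := 0)" "m - k"] True k
      by (simp add: a_def b_def Suc_diff_le[symmetric])
    moreover have "(-1::rat)^(k - 1) + (-1)^k = 0"
      using k by (cases k) simp_all
    ultimately have "(-1::rat)^(k - 1) * a + (-1)^k * b = 0"
      by (metis distrib_right mult_zero_left)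
    moreover have "k - 1 \<le> m" using True by simp
    ultimately show ?thesis using True by simp
  next
    case False
    have "k - 1 \<le> m \<Longrightarrow> a = 0"
      using False fa by (simp add: a_def ecoeff_def xsupp_fun_upd)
    then show ?thesis using False by simp
  qed
  finally show ?thesis .
qed

text \<open>Coefficientwise, \<open>\<Sum>\<^sub>r (-x\<^sub>i)\<^sup>r e\<^sub>m\<^sub>-\<^sub>r = e\<^sub>m\<close> of the variables other than \<open>x\<^sub>i\<close>.\<close>
lemma ecoeff_alternating_sum:
  assumes iJ: "i \<notin> J" and fa: "finite (xsupp \<alpha>)"
  shows "(\<Sum>r\<le>m. (-1)^r * (if r \<le> \<alpha> i then ecoeff J (m - r) (\<alpha>(i := \<alpha> i - r)) else 0))
         = ecoeff (insert i J) m \<alpha>"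
proof (cases "\<alpha> i = 0")
  case True
  have "(\<Sum>r\<le>m. (-1)^r * (if r \<le> \<alpha> i then ecoeff J (m - r) (\<alpha>(i := \<alpha> i - r)) else 0))
      = (\<Sum>r\<le>m. if r = 0 then ecoeff J m \<alpha> else 0)"
    by (rule sum.cong) (auto simp: True fun_upd_idem)
  then show ?thesis using True by (simp add: ecoeff_insert_zero)
next
  case False
  then show ?thesis
    using ecoeff_alternating_sum_eq_0[OF iJ fa False] by (simp add: ecoeff_def)
qed

lemma xdeg_fun_upd:
  assumes "finite (xsupp \<alpha>)"
  shows "xdeg (\<alpha>(i := v)) + \<alpha> i = xdeg \<alpha> + v"
proof -
  let ?F = "insert i (xsupp \<alpha>)"
  have fF: "finite ?F" using assms by simp
  have "xdeg (\<alpha>(i := v)) = (\<Sum>l\<in>?F. (\<alpha>(i := v)) l)"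
    by (rule xdeg_eq_sum[OF fF]) (auto simp: xsupp_def)
  also have "\<dots> = (\<alpha>(i := v)) i + (\<Sum>l\<in>?F - {i}. (\<alpha>(i := v)) l)"
    by (rule sum.remove[OF fF]) simp
  also have "\<dots> = v + (\<Sum>l\<in>?F - {i}. \<alpha> l)"
    by (auto intro: sum.cong)
  finally have "xdeg (\<alpha>(i := v)) = v + (\<Sum>l\<in>?F - {i}. \<alpha> l)" .
  moreover have "xdeg \<alpha> = \<alpha> i + (\<Sum>l\<in>?F - {i}. \<alpha> l)"
    using xdeg_eq_sum[OF fF, of \<alpha>] sum.remove[OF fF, of i \<alpha>] by auto
  ultimately show ?thesis by simp
qed

lemma le_xdeg:
  assumes "finite (xsupp \<alpha>)"
  shows "\<alpha> i \<le> xdeg \<alpha>"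
  using xdeg_fun_upd[OF assms, of i 0] by linarith

lemma hcoeff_dx:
  assumes "finite (xsupp \<alpha>)"
  shows "hcoeff (m + 1) (\<alpha>(k := \<alpha> k + 1)) = hcoeff m \<alpha>"
proof -
  have "xdeg (\<alpha>(k := \<alpha> k + 1)) = xdeg \<alpha> + 1"
    using xdeg_fun_upd[OF assms, of k "\<alpha> k + 1"] by simp
  then show ?thesis using assms by (simp add: hcoeff_def)
qed

lemma hcoeff_sum:
  assumes fa: "finite (xsupp \<alpha>)"
  shows "(\<Sum>r\<le>m. if r \<le> \<alpha> i then hcoeff (m - r) (\<alpha>(i := \<alpha> i - r)) else 0)
         = of_nat (\<alpha> i + 1) * hcoeff m \<alpha>"
proof -
  have le: "\<alpha> i \<le> xdeg \<alpha>" by (rule le_xdeg[OF fa])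
  have "(if r \<le> \<alpha> i then hcoeff (m - r) (\<alpha>(i := \<alpha> i - r)) else 0)
      = (if r \<le> \<alpha> i \<and> xdeg \<alpha> = m then 1 else 0)" if "r \<le> m" for r
  proof (cases "r \<le> \<alpha> i")
    case True
    then have "xdeg (\<alpha>(i := \<alpha> i - r)) = xdeg \<alpha> - r"
      using xdeg_fun_upd[OF fa, of i "\<alpha> i - r"] by simp
    then show ?thesis using True that le fa by (auto simp: hcoeff_def)
  qed simp
  then have "(\<Sum>r\<le>m. if r \<le> \<alpha> i then hcoeff (m - r) (\<alpha>(i := \<alpha> i - r)) else 0)
      = (\<Sum>r\<le>m. if r \<le> \<alpha> i \<and> xdeg \<alpha> = m then 1 else 0)"
    by (intro sum.cong) auto
  also have "\<dots> = of_nat (\<alpha> i + 1) * hcoeff m \<alpha>"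
  proof (cases "xdeg \<alpha> = m")
    case True
    then have "{..m} \<inter> {r. r \<le> \<alpha> i} = {..\<alpha> i}" using le by auto
    then show ?thesis using True fa by (simp add: sum.If_cases hcoeff_def)
  qed (simp add: hcoeff_def)
  finally show ?thesis .
qed

text \<open>The coefficientwise form of \<open>\<partial>\<^sub>k f\<^sub>n\<^sub>+\<^sub>1 = \<Sum>\<^sub>r\<^sub>\<le>\<^sub>n c\<^sub>r x\<^sub>k\<^sup>r f\<^sub>n\<^sub>-\<^sub>r\<close>, i.e. of
  \<open>\<partial>\<^sub>k F(t) = t F(t) \<Sum>\<^sub>r c\<^sub>r (x\<^sub>k t)\<^sup>r\<close> for the generating function \<open>F(t) = \<Sum>\<^sub>n f\<^sub>n t\<^sup>n\<close>.\<close>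
definition dx_recursion :: "(nat \<Rightarrow> rat) \<Rightarrow> (nat \<Rightarrow> sf) \<Rightarrow> bool" where
  "dx_recursion c f \<longleftrightarrow> (\<forall>n k \<alpha>. finite (xsupp \<alpha>) \<longrightarrow>
     dx k (f (n + 1)) \<alpha> {} = (\<Sum>r\<le>n. c r * (if r \<le> \<alpha> k then f (n - r) (\<alpha>(k := \<alpha> k - r)) {} else 0)))"

lemma dx_apply: "dx i f \<alpha> S = of_nat (\<alpha> i + 1) * f (\<alpha>(i := \<alpha> i + 1)) S"
  by (simp add: dx_def)

lemma dx_esym_coeff: "dx k (esym (n + 1)) \<alpha> {} = ecoeff {k} n \<alpha>"
proof -
  have "dx k (esym (n + 1)) \<alpha> {} = of_nat (\<alpha> k + 1) * ecoeff {} (n + 1) (\<alpha>(k := \<alpha> k + 1))"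
    by (simp add: dx_apply esym_apply)
  also have "\<dots> = ecoeff {k} n \<alpha>"
    using ecoeff_dx[of k "{}" \<alpha> n] by simp
  finally show ?thesis .
qed

lemma dx_hsym_coeff:
  assumes "finite (xsupp \<alpha>)"
  shows "dx k (hsym (n + 1)) \<alpha> {} = of_nat (\<alpha> k + 1) * hcoeff n \<alpha>"
proof -
  have "dx k (hsym (n + 1)) \<alpha> {} = of_nat (\<alpha> k + 1) * hcoeff (n + 1) (\<alpha>(k := \<alpha> k + 1))"
    by (simp add: dx_apply hsym_apply)
  then show ?thesis by (simp only: hcoeff_dx[OF assms])
qed

lemma dx_recursion_esym: "dx_recursion (\<lambda>r. (-1)^r) esym"
  unfolding dx_recursion_def
proof (intro allI impI)
  fix n k \<alpha> assume fa: "finite (xsupp (\<alpha> :: nat \<Rightarrow> nat))"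
  have "dx k (esym (n + 1)) \<alpha> {} = ecoeff (insert k {}) n \<alpha>"
    by (rule dx_esym_coeff)
  also have "\<dots> = (\<Sum>r\<le>n. (-1)^r * (if r \<le> \<alpha> k then ecoeff {} (n - r) (\<alpha>(k := \<alpha> k - r)) else 0))"
    by (rule ecoeff_alternating_sum[symmetric]) (use fa in auto)
  finally show "dx k (esym (n + 1)) \<alpha> {}
      = (\<Sum>r\<le>n. (-1)^r * (if r \<le> \<alpha> k then esym (n - r) (\<alpha>(k := \<alpha> k - r)) {} else 0))"
    by (simp add: esym_apply cong: if_cong)
qed

lemma dx_recursion_hsym: "dx_recursion (\<lambda>r. 1) hsym"
  unfolding dx_recursion_def
proof (intro allI impI)
  fix n k \<alpha> assume fa: "finite (xsupp (\<alpha> :: nat \<Rightarrow> nat))"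
  show "dx k (hsym (n + 1)) \<alpha> {}
      = (\<Sum>r\<le>n. 1 * (if r \<le> \<alpha> k then hsym (n - r) (\<alpha>(k := \<alpha> k - r)) {} else 0))"
    using hcoeff_sum[OF fa, where m=n and i=k] dx_hsym_coeff[OF fa, of k n]
    by (simp add: hsym_apply cong: if_cong)
qed

lemma newton_psum_coeff:
  assumes rec: "dx_recursion c f" and fa: "finite (xsupp \<alpha>)"
  shows "(\<Sum>r\<le>n. sf_smul (c r) (sf_mul (psum r) (f (n - r)))) \<alpha> {}
         = (\<Sum>k\<in>xsupp \<alpha>. dx k (f (n + 1)) \<alpha> {} - c 0 * f n \<alpha> {})"
proof -
  let ?X = "\<lambda>k r. if r \<le> \<alpha> k then f (n - r) (\<alpha>(k := \<alpha> k - r)) {} else 0"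
  let ?Y = "\<lambda>k r. if 0 < r \<and> r \<le> \<alpha> k then f (n - r) (\<alpha>(k := \<alpha> k - r)) {} else 0"
  have "(\<Sum>r\<le>n. sf_smul (c r) (sf_mul (psum r) (f (n - r)))) \<alpha> {}
      = (\<Sum>r\<le>n. c r * (\<Sum>k\<in>xsupp \<alpha>. ?Y k r))"
    by (simp add: sum_sf_apply sf_smul_apply sf_mul_psum_coeff[OF fa])
  also have "\<dots> = (\<Sum>k\<in>xsupp \<alpha>. \<Sum>r\<le>n. c r * ?Y k r)"
    unfolding sum_distrib_left by (rule sum.swap)
  also have "\<dots> = (\<Sum>k\<in>xsupp \<alpha>. (\<Sum>r\<le>n. c r * ?X k r) - c 0 * f n \<alpha> {})"
    by (intro sum.cong refl) (simp add: sum.atMost_shift)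
  also have "\<dots> = (\<Sum>k\<in>xsupp \<alpha>. dx k (f (n + 1)) \<alpha> {} - c 0 * f n \<alpha> {})"
    using rec fa by (simp add: dx_recursion_def)
  finally show ?thesis .
qed

lemma sf_ext_grassmann_free:
  assumes "grassmann_free f" "grassmann_free g"
    and "\<And>\<alpha>. finite (xsupp \<alpha>) \<Longrightarrow> f \<alpha> {} = g \<alpha> {}"
    and "\<And>\<alpha>. \<not> finite (xsupp \<alpha>) \<Longrightarrow> f \<alpha> {} = 0 \<and> g \<alpha> {} = 0"
  shows "f = g"
proof (intro ext)
  fix \<alpha> S
  show "f \<alpha> S = g \<alpha> S"
    using assms by (cases "S = {}"; cases "finite (xsupp \<alpha>)") (auto simp: grassmann_free_def)
qed

lemma grassmann_free_sf_smul: "grassmann_free f \<Longrightarrow> grassmann_free (sf_smul c f)"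
  by (simp add: grassmann_free_def sf_smul_apply)

lemma grassmann_free_newton_sum:
  assumes "\<And>m. grassmann_free (f m)"
  shows "grassmann_free (\<Sum>r\<le>n. sf_smul (c r) (sf_mul (psum r) (f (n - r))))"
  using assms by (simp add: grassmann_free_def sum_sf_apply sf_smul_apply sf_mul_psum_nonempty)

lemma newton_esym:
  "(\<Sum>r\<le>n. sf_smul ((-1)^r) (sf_mul (psum r) (esym (n - r)))) = sf_smul (- of_nat n) (esym n)"
proof (rule sf_ext_grassmann_free)
  fix \<alpha> :: "nat \<Rightarrow> nat" assume fa: "finite (xsupp \<alpha>)"
  have "dx k (esym (n + 1)) \<alpha> {} = 0" if "k \<in> xsupp \<alpha>" for k
    using that by (simp only: dx_esym_coeff) (simp add: ecoeff_def xsupp_def)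
  then have "(\<Sum>r\<le>n. sf_smul ((-1)^r) (sf_mul (psum r) (esym (n - r)))) \<alpha> {}
      = - of_nat (card (xsupp \<alpha>)) * esym n \<alpha> {}"
    using newton_psum_coeff[OF dx_recursion_esym fa] by simp
  also have "\<dots> = - of_nat n * esym n \<alpha> {}"
    by (simp add: esym_apply ecoeff_def)
  finally show "(\<Sum>r\<le>n. sf_smul ((-1)^r) (sf_mul (psum r) (esym (n - r)))) \<alpha> {}
      = sf_smul (- of_nat n) (esym n) \<alpha> {}"
    by (simp add: sf_smul_apply)
next
  fix \<alpha> :: "nat \<Rightarrow> nat" assume "\<not> finite (xsupp \<alpha>)"
  then show "(\<Sum>r\<le>n. sf_smul ((-1)^r) (sf_mul (psum r) (esym (n - r)))) \<alpha> {} = 0 \<and>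
      sf_smul (- of_nat n) (esym n) \<alpha> {} = 0"
    by (simp add: sum_sf_apply sf_smul_apply sf_mul_eq_0_if_infinite esym_def)
qed (intro grassmann_free_newton_sum grassmann_free_sf_smul grassmann_free_esym)+

lemma newton_hsym:
  "(\<Sum>r\<le>n. sf_mul (psum r) (hsym (n - r))) = sf_smul (of_nat n) (hsym n)"
proof -
  have "(\<Sum>r\<le>n. sf_smul 1 (sf_mul (psum r) (hsym (n - r)))) = sf_smul (of_nat n) (hsym n)"
  proof (rule sf_ext_grassmann_free)
    fix \<alpha> :: "nat \<Rightarrow> nat" assume fa: "finite (xsupp \<alpha>)"
    have "(\<Sum>r\<le>n. sf_smul 1 (sf_mul (psum r) (hsym (n - r)))) \<alpha> {}
        = (\<Sum>k\<in>xsupp \<alpha>. dx k (hsym (n + 1)) \<alpha> {} - 1 * hsym n \<alpha> {})"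
      by (rule newton_psum_coeff[OF dx_recursion_hsym fa])
    also have "\<dots> = (\<Sum>k\<in>xsupp \<alpha>. of_nat (\<alpha> k) * hcoeff n \<alpha>)"
      by (intro sum.cong refl) (simp only: dx_hsym_coeff[OF fa], simp add: hsym_apply algebra_simps)
    also have "\<dots> = of_nat (xdeg \<alpha>) * hcoeff n \<alpha>"
      by (simp add: xdeg_def sum_distrib_right)
    also have "\<dots> = sf_smul (of_nat n) (hsym n) \<alpha> {}"
      by (simp add: sf_smul_apply hsym_apply hcoeff_def)
    finally show "(\<Sum>r\<le>n. sf_smul 1 (sf_mul (psum r) (hsym (n - r)))) \<alpha> {}
        = sf_smul (of_nat n) (hsym n) \<alpha> {}" .
  next
    fix \<alpha> :: "nat \<Rightarrow> nat" assume "\<not> finite (xsupp \<alpha>)"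
    then show "(\<Sum>r\<le>n. sf_smul 1 (sf_mul (psum r) (hsym (n - r)))) \<alpha> {} = 0 \<and>
        sf_smul (of_nat n) (hsym n) \<alpha> {} = 0"
      by (simp add: sum_sf_apply sf_smul_apply sf_mul_eq_0_if_infinite hsym_def)
  qed (intro grassmann_free_newton_sum grassmann_free_sf_smul grassmann_free_hsym)+
  then show ?thesis by simp
qed

lemma grass_of_newton:
  assumes inj: "inj G" and gf: "\<And>m. grassmann_free (f m)" and rec: "dx_recursion c f"
  shows "grass_of G f n = (\<Sum>r\<le>n. sf_smul (c r) (sf_mul (psum_grass G r) (f (n - r))))"
proof (intro ext)
  fix \<alpha> S
  show "grass_of G f n \<alpha> S = (\<Sum>r\<le>n. sf_smul (c r) (sf_mul (psum_grass G r) (f (n - r)))) \<alpha> S"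
  proof (cases "\<exists>k. S = {G k}")
    case True
    then obtain k where S: "S = {G k}" by blast
    show ?thesis
      using rec unfolding S grass_of_coeff[OF inj gf] dx_recursion_def
      by (simp add: sum_sf_apply sf_smul_apply sf_mul_psum_grass_coeff[OF inj])
  next
    case False
    then show ?thesis
      by (simp add: sum_sf_apply sf_smul_apply grass_of_zero gf sf_mul_psum_grass_zero)
  qed
qed


definition bar_under_conv :: "(nat \<Rightarrow> sf) \<Rightarrow> nat \<Rightarrow> nat \<Rightarrow> sf" where
  "bar_under_conv f m k = (\<Sum>a\<le>m. sf_mul (psum_bar a) (sf_mul (psum_under (m - a)) (f k)))"

lemma bar_under_conv_coeff:
  assumes fa: "finite (xsupp \<alpha>)"
  shows "bar_under_conv f m k \<alpha> {phi_idx i, theta_idx j} = gsign {phi_idx i} {theta_idx j} *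
    (\<Sum>a\<le>m. if a \<le> \<alpha> i \<and> m - a \<le> (\<alpha>(i := \<alpha> i - a)) j
             then f k ((\<alpha>(i := \<alpha> i - a))(j := (\<alpha>(i := \<alpha> i - a)) j - (m - a))) {} else 0)"
  unfolding bar_under_conv_def sum_sf_apply sf_mul_psum_bar_coeff_pair sum_distrib_left
  using fa by (intro sum.cong refl)
    (simp add: psum_under_eq_psum_grass sf_mul_psum_grass_coeff[OF inj_theta_idx])

lemma bar_under_conv_coeff_diag:
  assumes fa: "finite (xsupp \<alpha>)"
  shows "bar_under_conv f m k \<alpha> {phi_idx i, theta_idx i}
         = of_nat (m + 1) * (if m \<le> \<alpha> i then f k (\<alpha>(i := \<alpha> i - m)) {} else 0)"
proof -
  have "(if a \<le> \<alpha> i \<and> m - a \<le> (\<alpha>(i := \<alpha> i - a)) i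
         then f k ((\<alpha>(i := \<alpha> i - a))(i := (\<alpha>(i := \<alpha> i - a)) i - (m - a))) {} else 0)
      = (if m \<le> \<alpha> i then f k (\<alpha>(i := \<alpha> i - m)) {} else 0)" if "a \<le> m" for a
    using that by (auto simp: diff_diff_add)
  then show ?thesis
    by (simp add: bar_under_conv_coeff[OF fa])
qed

lemma sum_triangle:
  fixes G :: "nat \<Rightarrow> nat \<Rightarrow> 'a::comm_monoid_add"
  shows "(\<Sum>m\<le>n. \<Sum>a\<le>m. G a (m - a)) = (\<Sum>a\<le>n. \<Sum>b\<le>n - a. G a b)"
proof -
  have "(\<Sum>m\<le>n. \<Sum>a\<le>m. G a (m - a)) = (\<Sum>(m,a)\<in>Sigma {..n} (\<lambda>m. {..m}). G a (m - a))"
    by (rule sum.Sigma) auto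
  also have "\<dots> = (\<Sum>(a,b)\<in>Sigma {..n} (\<lambda>a. {..n - a}). G a b)"
    by (rule sum.reindex_bij_witness[where i="\<lambda>(a,b). (a+b, a)" and j="\<lambda>(m,a). (a, m - a)"]) auto
  also have "\<dots> = (\<Sum>a\<le>n. \<Sum>b\<le>n - a. G a b)"
    by (rule sum.Sigma[symmetric]) auto
  finally show ?thesis .
qed

lemma bar_under_conv_sum_coeff:
  assumes fa: "finite (xsupp \<alpha>)" and ij: "i \<noteq> j"
  shows "(\<Sum>m\<le>n. c m * bar_under_conv f m (n - m) \<alpha> {phi_idx i, theta_idx j})
    = gsign {phi_idx i} {theta_idx j} * (\<Sum>a\<le>n. \<Sum>b\<le>n - a. c (a + b) *
        (if a \<le> \<alpha> i \<and> b \<le> \<alpha> j then f (n - a - b) ((\<alpha>(i := \<alpha> i - a))(j := \<alpha> j - b)) {} else 0))"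
proof -
  let ?X = "\<lambda>a b. c (a + b) *
    (if a \<le> \<alpha> i \<and> b \<le> \<alpha> j then f (n - a - b) ((\<alpha>(i := \<alpha> i - a))(j := \<alpha> j - b)) {} else 0)"
  have "(\<Sum>m\<le>n. c m * bar_under_conv f m (n - m) \<alpha> {phi_idx i, theta_idx j})
      = gsign {phi_idx i} {theta_idx j} * (\<Sum>m\<le>n. \<Sum>a\<le>m. ?X a (m - a))"
    using fa ij by (simp add: bar_under_conv_coeff sum_distrib_left diff_diff_add ac_simps cong: if_cong)
  also have "\<dots> = gsign {phi_idx i} {theta_idx j} * (\<Sum>a\<le>n. \<Sum>b\<le>n - a. ?X a b)"
    by (simp only: sum_triangle[of ?X n])
  finally show ?thesis .
qed

lemma sf_one_apply: "sf_one \<alpha> S = (if \<alpha> = (\<lambda>_. 0) \<and> S = {} then 1 else 0)"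
  by (simp add: sf_one_def)

text \<open>Applying the recursion once in each variable; the term left over in the second application
  involves \<open>f\<^sub>0 = 1\<close> at a nonconstant monomial and vanishes.\<close>
lemma dx_dx_recursion:
  assumes rec: "dx_recursion c f" and f0: "f 0 = sf_one" and fa: "finite (xsupp \<alpha>)" and ij: "i \<noteq> j"
  shows "dx i (dx j (f (n + 2))) \<alpha> {} = (\<Sum>a\<le>n. \<Sum>b\<le>n - a. c a * c b *
           (if a \<le> \<alpha> i \<and> b \<le> \<alpha> j then f (n - a - b) ((\<alpha>(i := \<alpha> i - a))(j := \<alpha> j - b)) {} else 0))"
proof -
  define \<beta> where "\<beta> = \<alpha>(j := \<alpha> j + 1)"
  have fb: "finite (xsupp \<beta>)" using fa by (simp add: \<beta>_def)
  have inner: "(\<Sum>b\<le>n - a. c a * c b *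
           (if a \<le> \<alpha> i \<and> b \<le> \<alpha> j then f (n - a - b) ((\<alpha>(i := \<alpha> i - a))(j := \<alpha> j - b)) {} else 0))
      = of_nat (\<alpha> j + 1) * (c a * (if a \<le> \<beta> i then f (n + 1 - a) (\<beta>(i := \<beta> i - a)) {} else 0))"
    if "a \<le> n" for a
  proof (cases "a \<le> \<alpha> i")
    case True
    have "dx j (f (n - a + 1)) (\<alpha>(i := \<alpha> i - a)) {}
        = (\<Sum>b\<le>n - a. c b * (if b \<le> \<alpha> j then f (n - a - b) ((\<alpha>(i := \<alpha> i - a))(j := \<alpha> j - b)) {} else 0))"
      using rec fa ij unfolding dx_recursion_def by (simp cong: if_cong)
    moreover have "n - a + 1 = n + 1 - a" "(\<alpha>(i := \<alpha> i - a))(j := \<alpha> j + 1) = \<beta>(i := \<beta> i - a)"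
      using that ij by (auto simp: \<beta>_def fun_upd_twist)
    ultimately show ?thesis
      using True ij by (simp add: dx_apply sum_distrib_left \<beta>_def ac_simps)
  qed (simp add: \<beta>_def ij)
  have last: "f (n + 1 - (n + 1)) (\<beta>(i := \<beta> i - (n + 1))) {} = 0"
  proof -
    have "(\<beta>(i := \<beta> i - (n + 1))) j \<noteq> 0" using ij by (simp add: \<beta>_def)
    then have "\<beta>(i := \<beta> i - (n + 1)) \<noteq> (\<lambda>_. 0)" by (metis (mono_tags))
    then show ?thesis by (simp add: f0 sf_one_apply)
  qed
  have "(\<Sum>a\<le>n. \<Sum>b\<le>n - a. c a * c b *
           (if a \<le> \<alpha> i \<and> b \<le> \<alpha> j then f (n - a - b) ((\<alpha>(i := \<alpha> i - a))(j := \<alpha> j - b)) {} else 0))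
      = of_nat (\<alpha> j + 1) * (\<Sum>a\<le>n + 1. c a * (if a \<le> \<beta> i then f (n + 1 - a) (\<beta>(i := \<beta> i - a)) {} else 0))"
    using last by (simp add: inner sum_distrib_left)
  also have "\<dots> = of_nat (\<alpha> j + 1) * dx i (f (n + 2)) \<beta> {}"
    using rec fb unfolding dx_recursion_def by (simp add: numeral_2_eq_2 cong: if_cong)
  also have "\<dots> = dx i (dx j (f (n + 2))) \<alpha> {}"
    using ij by (simp add: dx_apply \<beta>_def fun_upd_twist)
  finally show ?thesis by simp
qed

lemma barunder_of_newton:
  assumes gf: "\<And>m. grassmann_free (f m)" and rec: "dx_recursion c f" and f0: "f 0 = sf_one"
    and mult: "\<And>a b. c (a + b) = c a * c b"
    and diag: "\<And>\<alpha> i. finite (xsupp \<alpha>) \<Longrightarrow> dx i (dx i (f (n + 2))) \<alpha> {} =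
       (\<Sum>m\<le>n. c m * (of_nat (m + 1) + d m) * (if m \<le> \<alpha> i then f (n - m) (\<alpha>(i := \<alpha> i - m)) {} else 0))"
  shows "barunder_of f n = (\<Sum>m\<le>n. sf_smul (c m)
           (bar_under_conv f m (n - m) + sf_smul (d m) (sf_mul (psum_barunder m) (f (n - m)))))"
    (is "_ = ?R")
proof (intro ext)
  fix \<alpha> S
  have R: "?R \<alpha> S = (\<Sum>m\<le>n. c m * (bar_under_conv f m (n - m) \<alpha> S
                        + d m * sf_mul (psum_barunder m) (f (n - m)) \<alpha> S))"
    by (simp add: sum_sf_apply sf_smul_apply)
  show "barunder_of f n \<alpha> S = ?R \<alpha> S"
  proof (cases "\<exists>i j. S = {phi_idx i, theta_idx j}")
    case False
    then show ?thesis
      unfolding R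
      by (simp add: bar_under_conv_def sum_sf_apply gf barunder_of_zero sf_mul_psum_bar_under_zero
          sf_mul_psum_barunder_zero)
  next
    case True
    then obtain i j where S: "S = {phi_idx i, theta_idx j}" by blast
    show ?thesis
    proof (cases "finite (xsupp \<alpha>)")
      case False
      then show ?thesis
        unfolding R unfolding S barunder_of_coeff
        by (simp add: bar_under_conv_def sum_sf_apply sf_mul_eq_0_if_infinite)
    next
      case fa: True
      show ?thesis
      proof (cases "i = j")
        case True
        have "?R \<alpha> S = (\<Sum>m\<le>n. c m * (of_nat (m + 1) + d m) *
                (if m \<le> \<alpha> j then f (n - m) (\<alpha>(j := \<alpha> j - m)) {} else 0))"
          unfolding R unfolding S True using fa
          by (intro sum.cong refl)
            (simp add: bar_under_conv_coeff_diag sf_mul_psum_barunder_coeff_pair algebra_simps)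
        also have "\<dots> = dx j (dx j (f (n + 2))) \<alpha> {}"
          by (rule diag[OF fa, symmetric])
        finally show ?thesis
          using fa by (simp add: S True barunder_of_coeff)
      next
        case False
        have "?R \<alpha> S = (\<Sum>m\<le>n. c m * bar_under_conv f m (n - m) \<alpha> {phi_idx i, theta_idx j})"
          unfolding R unfolding S using False by (simp add: sf_mul_psum_barunder_coeff_pair)
        also have "\<dots> = gsign {phi_idx i} {theta_idx j} * dx i (dx j (f (n + 2))) \<alpha> {}"
          unfolding bar_under_conv_sum_coeff[OF fa False] dx_dx_recursion[OF rec f0 fa False] mult ..
        finally show ?thesis
          using fa by (simp add: S barunder_of_coeff)
      qed
    qed
  qed
qed

lemma dx_dx_esym_diag: "dx i (dx i (esym (n + 2))) \<alpha> {} = 0"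
proof -
  have "ecoeff {} (n + 2) ((\<alpha>(i := \<alpha> i + 1))(i := \<alpha> i + 2)) = 0"
    by (rule ecoeff_gt_one[where i=i]) simp
  then show ?thesis by (simp add: dx_apply esym_apply)
qed

lemma hcoeff_fun_upd_diff:
  assumes fa: "finite (xsupp \<alpha>)" and "r \<le> \<alpha> i" "r \<le> m"
  shows "hcoeff (m - r) (\<alpha>(i := \<alpha> i - r)) = hcoeff m \<alpha>"
proof -
  have "xdeg (\<alpha>(i := \<alpha> i - r)) = xdeg \<alpha> - r"
    using xdeg_fun_upd[OF fa, of i "\<alpha> i - r"] assms(2) by simp
  moreover have "\<alpha> i \<le> xdeg \<alpha>" by (rule le_xdeg[OF fa])
  ultimately show ?thesis using assms by (auto simp: hcoeff_def)
qed

lemma sum_double_gauss: "(\<Sum>m\<le>k. 2 * (of_nat m + 1) :: rat) = of_nat ((k + 1) * (k + 2))"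
  by (induction k) (simp_all add: algebra_simps)

lemma dx_dx_hsym_diag:
  assumes fa: "finite (xsupp \<alpha>)"
  shows "dx i (dx i (hsym (n + 2))) \<alpha> {} = (\<Sum>m\<le>n. 1 * (of_nat (m + 1) + of_nat (m + 1)) *
           (if m \<le> \<alpha> i then hsym (n - m) (\<alpha>(i := \<alpha> i - m)) {} else 0))"
proof -
  have "hcoeff (n + 2) ((\<alpha>(i := \<alpha> i + 1))(i := \<alpha> i + 2)) = hcoeff n \<alpha>"
    using hcoeff_dx[OF fa, of n i] hcoeff_dx[of "\<alpha>(i := \<alpha> i + 1)" "n + 1" i] fa
    by (simp add: numeral_2_eq_2)
  then have lhs: "dx i (dx i (hsym (n + 2))) \<alpha> {} = of_nat ((\<alpha> i + 1) * (\<alpha> i + 2)) * hcoeff n \<alpha>"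
    by (simp add: dx_apply hsym_apply algebra_simps)
  show ?thesis
  proof (cases "hcoeff n \<alpha> = 0")
    case True
    then show ?thesis
      using lhs fa by (simp add: hsym_apply hcoeff_fun_upd_diff cong: if_cong)
  next
    case False
    then have "\<alpha> i \<le> n"
      using le_xdeg[OF fa, of i] by (simp add: hcoeff_def split: if_splits)
    have "(\<Sum>m\<le>n. 1 * (of_nat (m + 1) + of_nat (m + 1)) *
           (if m \<le> \<alpha> i then hsym (n - m) (\<alpha>(i := \<alpha> i - m)) {} else 0))
        = (\<Sum>m\<le>n. if m \<le> \<alpha> i then 2 * (of_nat m + 1) * hcoeff n \<alpha> else 0)"
      using fa by (intro sum.cong refl) (simp add: hsym_apply hcoeff_fun_upd_diff)
    also have "\<dots> = (\<Sum>m\<le>\<alpha> i. 2 * (of_nat m + 1) * hcoeff n \<alpha>)"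
      using \<open>\<alpha> i \<le> n\<close> by (intro sum.mono_neutral_cong_right) auto
    also have "\<dots> = (\<Sum>m\<le>\<alpha> i. 2 * (of_nat m + 1)) * hcoeff n \<alpha>"
      by (rule sum_distrib_right[symmetric])
    also have "\<dots> = of_nat ((\<alpha> i + 1) * (\<alpha> i + 2)) * hcoeff n \<alpha>"
      by (simp only: sum_double_gauss)
    finally show ?thesis
      using lhs by simp
  qed
qed

lemma esym_0: "esym 0 = sf_one"
proof (intro ext)
  fix \<alpha> S
  have "finite (xsupp \<alpha>) \<and> card (xsupp \<alpha>) = 0 \<longleftrightarrow> \<alpha> = (\<lambda>_. 0)"
    by (auto simp: xsupp_def fun_eq_iff)
  then show "esym 0 \<alpha> S = sf_one \<alpha> S" by (auto simp: esym_def sf_one_def)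
qed

lemma hsym_0: "hsym 0 = sf_one"
proof (intro ext)
  fix \<alpha> S
  have "finite (xsupp \<alpha>) \<and> xdeg \<alpha> = 0 \<longleftrightarrow> \<alpha> = (\<lambda>_. 0)"
    using le_xdeg[of \<alpha>] by (auto simp: xdeg_def xsupp_def fun_eq_iff le_zero_eq)
  then show "hsym 0 \<alpha> S = sf_one \<alpha> S" by (auto simp: hsym_def sf_one_def)
qed

lemma barunder_of_esym:
  "barunder_of esym n = (\<Sum>m\<le>n. sf_smul ((-1)^m)
     (bar_under_conv esym m (n - m) + sf_smul (- of_nat (m + 1)) (sf_mul (psum_barunder m) (esym (n - m)))))"
  by (rule barunder_of_newton)
    (simp_all add: grassmann_free_esym dx_recursion_esym esym_0 power_add dx_dx_esym_diag[simplified])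

lemma barunder_of_hsym:
  "barunder_of hsym n = (\<Sum>m\<le>n. sf_smul 1
     (bar_under_conv hsym m (n - m) + sf_smul (of_nat (m + 1)) (sf_mul (psum_barunder m) (hsym (n - m)))))"
  by (rule barunder_of_newton)
    (simp_all add: grassmann_free_hsym dx_recursion_hsym hsym_0 dx_dx_hsym_diag[simplified])


section \<open>The endomorphism\<close>

lemma neg_one_power_square: "(-1::rat)^m * (-1)^m = 1"
  by (simp add: power_add[symmetric])

text \<open>Triangularity: since \<open>h\<^sub>0 = 1\<close>, a convolution identity against \<open>h\<close> determines \<open>u\<^sub>n\<close>
  from \<open>q\<^sub>n\<close> by induction on \<open>n\<close>.\<close>
lemma convolution_hsym_unique:
  fixes u q :: "nat \<Rightarrow> sf"
  assumes wf: "\<And>r. well_formed (u r)" "\<And>r. well_formed (q r)"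
    and conv: "\<And>n. (\<Sum>r\<le>n. sf_smul ((-1)^r) (sf_mul (u r) (hsym (n - r))))
                   = sf_smul c (\<Sum>r\<le>n. sf_mul (q r) (hsym (n - r)))"
  shows "u n = sf_smul (c * (-1)^n) (q n)"
proof (induction n rule: less_induct)
  case (less n)
  have "sf_smul ((-1)^r) (sf_mul (u r) (hsym (n - r))) = sf_smul c (sf_mul (q r) (hsym (n - r)))"
    if "r < n" for r
    using less.IH[OF that] by (simp add: sf_mul_smul_left sf_smul_smul power_add[symmetric] ac_simps)
  then have lower: "(\<Sum>r<n. sf_smul ((-1)^r) (sf_mul (u r) (hsym (n - r))))
      = sf_smul c (\<Sum>r<n. sf_mul (q r) (hsym (n - r)))"
    by (simp add: sf_smul_sum)
  have "sf_smul ((-1)^n) (u n) = sf_smul c (q n)"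
    using conv[of n] lower
    by (simp add: lessThan_Suc_atMost[symmetric] sf_smul_add hsym_0 sf_mul_one_right wf)
  then have "sf_smul ((-1)^n * (-1)^n) (u n) = sf_smul ((-1)^n * c) (q n)"
    by (metis sf_smul_smul)
  then show ?case by (simp add: neg_one_power_square mult.commute)
qed

locale omega_hat =
  fixes \<omega> :: "sf \<Rightarrow> sf"
  assumes endo: "is_alg_endo \<omega> PSinf"
    and omega_esym: "\<And>n. \<omega> (esym n) = hsym n"
    and omega_bar_of_esym: "\<And>n. \<omega> (bar_of esym n) = bar_of hsym n"
    and omega_under_of_esym: "\<And>n. \<omega> (under_of esym n) = under_of hsym n"
    and omega_barunder_of_esym: "\<And>n. \<omega> (barunder_of esym n) = barunder_of hsym n"
begin

lemma omega_in_PSinf: "f \<in> PSinf \<Longrightarrow> \<omega> f \<in> PSinf"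
  and omega_one: "\<omega> sf_one = sf_one"
  and omega_add: "f \<in> PSinf \<Longrightarrow> g \<in> PSinf \<Longrightarrow> \<omega> (f + g) = \<omega> f + \<omega> g"
  and omega_smul: "f \<in> PSinf \<Longrightarrow> \<omega> (sf_smul c f) = sf_smul c (\<omega> f)"
  and omega_mul: "f \<in> PSinf \<Longrightarrow> g \<in> PSinf \<Longrightarrow> \<omega> (sf_mul f g) = sf_mul (\<omega> f) (\<omega> g)"
  using endo by (simp_all add: is_alg_endo_def sf_add_eq_plus)

lemma omega_zero: "\<omega> 0 = 0"
  using omega_add[OF PSinf_zero PSinf_zero] by simp

lemma omega_sum: "(\<And>x. x \<in> A \<Longrightarrow> F x \<in> PSinf) \<Longrightarrow> \<omega> (sum F A) = (\<Sum>x\<in>A. \<omega> (F x))"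
  by (induction A rule: infinite_finite_induct) (auto simp: omega_zero omega_add PSinf_sum)

lemma omega_convolution:
  assumes "\<And>r. q r \<in> PSinf"
  shows "\<omega> (\<Sum>r\<le>n. sf_smul (c r) (sf_mul (q r) (esym (n - r))))
         = (\<Sum>r\<le>n. sf_smul (c r) (sf_mul (\<omega> (q r)) (hsym (n - r))))"
  using assms
  by (simp add: omega_sum omega_smul omega_mul omega_esym PSinf_smul PSinf_sf_mul esym_in_PSinf)

lemma well_formed_omega: "f \<in> PSinf \<Longrightarrow> well_formed (\<omega> f)"
  using omega_in_PSinf by (simp add: PSinf_def)

lemma omega_psum: "\<omega> (psum n) = sf_smul (- ((-1)^n)) (psum n)"
proof -
  have "\<omega> (psum n) = sf_smul (- 1 * (-1)^n) (psum n)"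
  proof (rule convolution_hsym_unique)
    fix n
    have "(\<Sum>r\<le>n. sf_smul ((-1)^r) (sf_mul (\<omega> (psum r)) (hsym (n - r))))
        = \<omega> (sf_smul (- of_nat n) (esym n))"
      by (simp add: omega_convolution psum_in_PSinf newton_esym[symmetric])
    also have "\<dots> = sf_smul (- 1) (\<Sum>r\<le>n. sf_mul (psum r) (hsym (n - r)))"
      by (simp add: omega_smul esym_in_PSinf omega_esym newton_hsym sf_smul_smul)
    finally show "(\<Sum>r\<le>n. sf_smul ((-1)^r) (sf_mul (\<omega> (psum r)) (hsym (n - r))))
        = sf_smul (- 1) (\<Sum>r\<le>n. sf_mul (psum r) (hsym (n - r)))" .
  qed (simp_all add: well_formed_omega well_formed_PSinf psum_in_PSinf)
  then show ?thesis by simp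
qed

lemma omega_psum_grass:
  assumes inj: "inj G" and in_PSinf: "\<And>r. psum_grass G r \<in> PSinf"
    and omega_grass_of: "\<And>n. \<omega> (grass_of G esym n) = grass_of G hsym n"
  shows "\<omega> (psum_grass G n) = sf_smul ((-1)^n) (psum_grass G n)"
proof -
  have "\<omega> (psum_grass G n) = sf_smul (1 * (-1)^n) (psum_grass G n)"
  proof (rule convolution_hsym_unique)
    fix n
    have "(\<Sum>r\<le>n. sf_smul ((-1)^r) (sf_mul (\<omega> (psum_grass G r)) (hsym (n - r))))
        = \<omega> (grass_of G esym n)"
      using grass_of_newton[OF inj grassmann_free_esym dx_recursion_esym]
      by (simp add: omega_convolution in_PSinf)
    also have "\<dots> = sf_smul 1 (\<Sum>r\<le>n. sf_mul (psum_grass G r) (hsym (n - r)))"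
      using grass_of_newton[OF inj grassmann_free_hsym dx_recursion_hsym] by (simp add: omega_grass_of)
    finally show "(\<Sum>r\<le>n. sf_smul ((-1)^r) (sf_mul (\<omega> (psum_grass G r)) (hsym (n - r))))
        = sf_smul 1 (\<Sum>r\<le>n. sf_mul (psum_grass G r) (hsym (n - r)))" .
  qed (simp_all add: well_formed_omega well_formed_PSinf in_PSinf)
  then show ?thesis by simp
qed

lemma omega_psum_bar: "\<omega> (psum_bar n) = sf_smul ((-1)^n) (psum_bar n)"
  using omega_psum_grass[OF inj_phi_idx] omega_bar_of_esym psum_bar_in_PSinf
  by (simp add: psum_bar_eq_psum_grass bar_of_eq_grass_of)

lemma omega_psum_under: "\<omega> (psum_under n) = sf_smul ((-1)^n) (psum_under n)"
  using omega_psum_grass[OF inj_theta_idx] omega_under_of_esym psum_under_in_PSinf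
  by (simp add: psum_under_eq_psum_grass under_of_eq_grass_of)

lemma bar_under_conv_in_PSinf: "bar_under_conv esym m k \<in> PSinf"
  unfolding bar_under_conv_def
  by (intro PSinf_sum PSinf_sf_mul psum_bar_in_PSinf psum_under_in_PSinf esym_in_PSinf)

lemma omega_bar_under_conv: "\<omega> (bar_under_conv esym m k) = sf_smul ((-1)^m) (bar_under_conv hsym m k)"
proof -
  have "\<omega> (sf_mul (psum_bar a) (sf_mul (psum_under (m - a)) (esym k)))
      = sf_smul ((-1)^m) (sf_mul (psum_bar a) (sf_mul (psum_under (m - a)) (hsym k)))" if "a \<le> m" for a
  proof -
    have "(-1::rat)^(m - a) * (-1)^a = (-1)^m"
      using that by (simp add: power_add[symmetric])
    then show ?thesis
      by (simp add: omega_mul omega_psum_bar omega_psum_under omega_esym PSinf_sf_mul psum_bar_in_PSinf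
          psum_under_in_PSinf esym_in_PSinf sf_mul_smul_left sf_mul_smul_right sf_smul_smul)
  qed
  then show ?thesis
    unfolding bar_under_conv_def
    by (simp add: omega_sum PSinf_sf_mul psum_bar_in_PSinf psum_under_in_PSinf esym_in_PSinf sf_smul_sum)
qed

lemma omega_psum_barunder: "\<omega> (psum_barunder n) = sf_smul (- ((-1)^n)) (psum_barunder n)"
proof -
  let ?u = "\<lambda>m. sf_smul (of_nat (m + 1)) (\<omega> (psum_barunder m))"
  let ?q = "\<lambda>m. sf_smul (of_nat (m + 1)) (psum_barunder m)"
  have "?u n = sf_smul (- 1 * (-1)^n) (?q n)"
  proof (rule convolution_hsym_unique)
    fix n
    let ?C = "\<lambda>m. bar_under_conv hsym m (n - m)"
    let ?Y = "\<lambda>m. sf_smul ((-1)^m) (sf_mul (?u m) (hsym (n - m)))"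
    let ?Z = "\<lambda>m. sf_mul (?q m) (hsym (n - m))"
    have "\<omega> (sf_smul ((-1)^m) (bar_under_conv esym m (n - m)
            + sf_smul (- of_nat (m + 1)) (sf_mul (psum_barunder m) (esym (n - m))))) = ?C m - ?Y m" for m
    proof -
      have "sf_mul (psum_barunder m) (esym (n - m)) \<in> PSinf"
        by (intro PSinf_sf_mul psum_barunder_in_PSinf esym_in_PSinf)
      then show ?thesis
        using bar_under_conv_in_PSinf[of m "n - m"]
        by (simp only: omega_smul omega_add omega_mul omega_bar_under_conv omega_esym PSinf_add
            PSinf_smul psum_barunder_in_PSinf esym_in_PSinf)
          (simp only: sf_smul_add sf_smul_diff sf_mul_smul_left sf_smul_smul neg_one_power_square sf_smul_one
            mult_minus_right sf_smul_uminus add_uminus_conv_diff)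
    qed
    then have "\<omega> (barunder_of esym n) = (\<Sum>m\<le>n. ?C m - ?Y m)"
      unfolding barunder_of_esym
      by (simp add: omega_sum bar_under_conv_in_PSinf psum_barunder_in_PSinf esym_in_PSinf PSinf_smul
          PSinf_add PSinf_sf_mul)
    moreover have "barunder_of hsym n = (\<Sum>m\<le>n. ?C m + ?Z m)"
      unfolding barunder_of_hsym by (simp add: sf_mul_smul_left)
    ultimately have "(\<Sum>m\<le>n. ?C m) - (\<Sum>m\<le>n. ?Y m) = (\<Sum>m\<le>n. ?C m) + (\<Sum>m\<le>n. ?Z m)"
      using omega_barunder_of_esym by (simp add: sum_subtractf sum.distrib)
    then show "(\<Sum>m\<le>n. ?Y m) = sf_smul (- 1) (\<Sum>m\<le>n. ?Z m)"
      by (simp add: sf_smul_minus_one minus_equation_iff)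
  qed (intro well_formed_PSinf PSinf_smul omega_in_PSinf psum_barunder_in_PSinf)+
  then have "sf_smul (of_nat (n + 1)) (\<omega> (psum_barunder n))
      = sf_smul (of_nat (n + 1)) (sf_smul (- ((-1)^n)) (psum_barunder n))"
    by (simp add: sf_smul_smul mult.commute)
  then show ?thesis
    by (rule sf_smul_cancel[rotated]) simp
qed

end

section \<open>Power sums indexed by superpartitions\<close>

definition part_exponent :: "mark \<times> nat \<Rightarrow> int" where
  "part_exponent a = int (snd a) - (if fst a = Bi then 1 else 0)
                       - (if fst a = Unm \<and> snd a \<noteq> 0 then 1 else 0)"

lemma omega_sign_exponent:
  "int (sp_size L) - int (len_bi L) - int (len_0 L) = sum_list (map part_exponent L)"
  by (induction L) (auto simp: sp_size_def len_bi_def len_0_def part_exponent_def)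

lemma neg_one_powi_int_minus_one: "(-1::rat) powi (int n - 1) = - ((-1)^n)"
proof -
  have "(-1::rat) powi (int n - 1) = (-1) powi (int n) / (-1) powi 1"
    by (rule power_int_diff) simp
  then show ?thesis by (simp add: power_int_of_nat)
qed

lemma ptilde_in_PSinf: "ptilde a \<in> PSinf"
  by (cases a rule: ptilde.cases)
    (simp_all add: psum_in_PSinf psum_bar_in_PSinf psum_under_in_PSinf psum_barunder_in_PSinf)

lemma p_sp_in_PSinf: "p_sp L \<in> PSinf"
  by (induction L) (simp_all add: p_sp_def PSinf_one PSinf_sf_mul ptilde_in_PSinf)

context omega_hat
begin

lemma omega_ptilde: "\<omega> (ptilde a) = sf_smul ((-1) powi part_exponent a) (ptilde a)"
proof (cases a rule: ptilde.cases)
  case (4 n)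
  then show ?thesis
    by (cases "n = 0")
      (simp add: part_exponent_def psum_def sf_zero_eq_0 omega_zero,
       simp add: part_exponent_def omega_psum neg_one_powi_int_minus_one)
qed (simp_all add: part_exponent_def omega_psum_barunder omega_psum_bar omega_psum_under
    neg_one_powi_int_minus_one)

text \<open>No condition on the list of parts is needed.\<close>
lemma omega_p_sp: "\<omega> (p_sp L) = sf_smul ((-1) powi sum_list (map part_exponent L)) (p_sp L)"
proof (induction L)
  case Nil
  then show ?case by (simp add: p_sp_def omega_one)
next
  case (Cons a L)
  have "p_sp (a # L) = sf_mul (ptilde a) (p_sp L)" by (simp add: p_sp_def)
  then show ?case
    using Cons by (simp add: omega_mul ptilde_in_PSinf p_sp_in_PSinf omega_ptilde sf_mul_smul_left
        sf_mul_smul_right sf_smul_smul power_int_add mult.commute)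
qed

end

theorem mainTheorem5:
  fixes \<omega> :: "sf \<Rightarrow> sf"
  assumes endo: "is_alg_endo \<omega> PSinf"
    and e: "\<And>n. \<omega> (esym n) = hsym n"
    and eb: "\<And>n. \<omega> (bar_of esym n) = bar_of hsym n"
    and eu: "\<And>n. \<omega> (under_of esym n) = under_of hsym n"
    and ebu: "\<And>n. \<omega> (barunder_of esym n) = barunder_of hsym n"
  shows "(\<forall>n\<ge>1. \<omega> (psum n) = sf_smul ((-1) powi (int n - 1)) (psum n))
       \<and> (\<forall>n. \<omega> (psum_bar n) = sf_smul ((-1) ^ n) (psum_bar n))
       \<and> (\<forall>n. \<omega> (psum_under n) = sf_smul ((-1) ^ n) (psum_under n))
       \<and> (\<forall>n. \<omega> (psum_barunder n) = sf_smul ((-1) powi (int n - 1)) (psum_barunder n))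
       \<and> (\<forall>L. is_superpartition L \<longrightarrow> \<omega> (p_sp L) = sf_smul (omega_sign L) (p_sp L))"
proof -
  interpret omega_hat \<omega>
    using assms by unfold_locales
  show ?thesis
    using omega_psum omega_psum_bar omega_psum_under omega_psum_barunder omega_p_sp
    by (simp add: neg_one_powi_int_minus_one omega_sign_def omega_sign_exponent)
qed

end
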